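(* Let $\mathscr K$ be a quasivariety of structures and let $n\ge1$ be an integer. Let $\mathbf F=\mathbf F_{\mathscr K}(n)$ be the $n$-generated $\mathscr K$-free structure, let $\mathbf T_n$ be the join semilattice (with $0$) of compact elements of $\operatorname{Con}_{\mathscr K}\mathbf F$, and let $\widehat{\mathscr E}=\{\widehat\varepsilon:\varepsilon\in\operatorname{End}\mathbf F\}$. Then the lattice of all quasi-equational theories that (1) contain the theory of $\mathscr K$ and (2) are determined relative to $\mathscr K$ by quasi-identities in at most $n$ variables, ordered by inclusion, is isomorphic to $\operatorname{Con}\mathbf S_n$, where $\mathbf S_n=\langle\mathbf T_n,\vee,0,\widehat{\mathscr E}\rangle$.
   Context: Structures have a signature of function and relation symbols; homomorphisms preserve operations and map relations into relations. A congruence on a structure $\mathbf A$ is a pair $\theta=\langle\theta_0,\theta_1\rangle$ with $\theta_0$ an equivalence relation compatible with the operations and, for each relation symbol $R$ of arity $m$, a set $\theta_1^R$ with $R^{\mathbf A}\subseteq\theta_1^R\subseteq A^m$ closed under componentwise $\theta_0$-equivalence. A quasivariety is a class of structures closed under substructures, direct products and ultraproducts, equivalently axiomatized by quasi-identities $\&_i\alpha_i\Rightarrow\beta$ with atomic formulae of the form $s\approx t$ or $R(\mathbf s)$ (equality being true equality); a quasi-equational theory is the set of quasi-identities valid in a quasivariety. A congruence $\psi$ of $\mathbf F$ is a $\mathscr K$-congruence if $\mathbf F/\psi\in\mathscr K$; these form an algebraic lattice $\operatorname{Con}_{\mathscr K}\mathbf F$, whose compact elements are the finite joins of the principal $\mathscr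 K$-congruences $\operatorname{con}_{\mathscr K}\alpha$ generated by single atomic formulae $\alpha$ over $\mathbf F$. For $\varepsilon\in\operatorname{End}\mathbf F$, $\widehat\varepsilon$ is defined by $\widehat\varepsilon(\operatorname{con}_{\mathscr K}(s,t))=\operatorname{con}_{\mathscr K}(\varepsilon s,\varepsilon t)$, $\widehat\varepsilon(\operatorname{con}_{\mathscr K}R(\mathbf s))=\operatorname{con}_{\mathscr K}R(\varepsilon\mathbf s)$, $\widehat\varepsilon(\bigvee_j\varphi_j)=\bigvee_j\widehat\varepsilon\varphi_j$; it is well defined and preserves joins and $0$. $\operatorname{Con}\mathbf S_n$ is the lattice of equivalence relations on $T_n$ compatible with $\vee$ and all $\widehat\varepsilon$. *)

theory Defs
  imports Main
begin

datatype ('f,'v) trm = Var 'v | Fn 'f "('f,'v) trm list"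

datatype ('f,'r,'v) atom = Eq "('f,'v) trm" "('f,'v) trm" | Rel 'r "('f,'v) trm list"

text \<open>A quasi-identity  p1 & ... & pk ==> c  is the pair (premises, conclusion).\<close>
type_synonym ('f,'r) qid = "('f,'r,nat) atom list \<times> ('f,'r,nat) atom"

fun wf_trm :: "('f \<Rightarrow> nat) \<Rightarrow> ('f,'v) trm \<Rightarrow> bool" where
  "wf_trm af (Var v) = True"
| "wf_trm af (Fn f ts) = (length ts = af f \<and> (\<forall>t\<in>set ts. wf_trm af t))"

fun wf_atom :: "('f \<Rightarrow> nat) \<Rightarrow> ('r \<Rightarrow> nat) \<Rightarrow> ('f,'r,'v) atom \<Rightarrow> bool" where
  "wf_atom af ar (Eq s t) = (wf_trm af s \<and> wf_trm af t)"
| "wf_atom af ar (Rel r ts) = (length ts = ar r \<and> (\<forall>t\<in>set ts. wf_trm af t))"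

definition wf_qid :: "('f \<Rightarrow> nat) \<Rightarrow> ('r \<Rightarrow> nat) \<Rightarrow> ('f,'r) qid \<Rightarrow> bool" where
  "wf_qid af ar q = ((\<forall>a\<in>set (fst q). wf_atom af ar a) \<and> wf_atom af ar (snd q))"

fun tvars :: "('f,'v) trm \<Rightarrow> 'v set" where
  "tvars (Var v) = {v}"
| "tvars (Fn f ts) = (\<Union>t\<in>set ts. tvars t)"

fun avars :: "('f,'r,'v) atom \<Rightarrow> 'v set" where
  "avars (Eq s t) = tvars s \<union> tvars t"
| "avars (Rel r ts) = (\<Union>t\<in>set ts. tvars t)"

definition qvars :: "('f,'r) qid \<Rightarrow> nat set" where
  "qvars q = (\<Union>a\<in>set (fst q). avars a) \<union> avars (snd q)"

record ('a,'f,'r) struc =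
  carrier :: "'a set"
  fnc :: "'f \<Rightarrow> 'a list \<Rightarrow> 'a"
  rel :: "'r \<Rightarrow> 'a list set"

definition is_struc :: "('f \<Rightarrow> nat) \<Rightarrow> ('r \<Rightarrow> nat) \<Rightarrow> ('a,'f,'r) struc \<Rightarrow> bool" where
  "is_struc af ar A =
     (carrier A \<noteq> {} \<and>
      (\<forall>f xs. set xs \<subseteq> carrier A \<and> length xs = af f \<longrightarrow> fnc A f xs \<in> carrier A) \<and>
      (\<forall>r. rel A r \<subseteq> {xs. set xs \<subseteq> carrier A \<and> length xs = ar r}))"

fun eval :: "('a,'f,'r) struc \<Rightarrow> ('v \<Rightarrow> 'a) \<Rightarrow> ('f,'v) trm \<Rightarrow> 'a" where
  "eval A h (Var v) = h v"
| "eval A h (Fn f ts) = fnc A f (map (eval A h) ts)"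

fun holds :: "('a,'f,'r) struc \<Rightarrow> ('v \<Rightarrow> 'a) \<Rightarrow> ('f,'r,'v) atom \<Rightarrow> bool" where
  "holds A h (Eq s t) = (eval A h s = eval A h t)"
| "holds A h (Rel r ts) = (map (eval A h) ts \<in> rel A r)"

definition sat_qid :: "('a,'f,'r) struc \<Rightarrow> ('f,'r) qid \<Rightarrow> bool" where
  "sat_qid A q =
     (\<forall>h. range h \<subseteq> carrier A \<longrightarrow> (\<forall>p\<in>set (fst q). holds A h p) \<longrightarrow> holds A h (snd q))"

text \<open>Models of a set of quasi-identities; the quasivariety axiomatized by Sig
  is the class of all A with model af ar Sig A.\<close>
definition model :: "('f \<Rightarrow> nat) \<Rightarrow> ('r \<Rightarrow> nat) \<Rightarrow> ('f,'r) qid set \<Rightarrow> ('a,'f,'r) struc \<Rightarrow> bool" where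
  "model af ar Sig A = (is_struc af ar A \<and> (\<forall>q\<in>Sig. sat_qid A q))"

text \<open>Validity of a quasi-identity in all models of Sig is
  tested on models whose carrier lives in the type of sets of terms; this type
  is large enough to contain (a copy of) every relatively free model generated by
  the variables, so this coincides with consequence over structures of any type.\<close>
definition Cn :: "('f \<Rightarrow> nat) \<Rightarrow> ('r \<Rightarrow> nat) \<Rightarrow> ('f,'r) qid set \<Rightarrow> ('f,'r) qid set" where
  "Cn af ar Sig = {q. wf_qid af ar q \<and>
     (\<forall>A :: (('f,nat) trm set,'f,'r) struc. model af ar Sig A \<longrightarrow> sat_qid A q)}"

definition qe_theory :: "('f \<Rightarrow> nat) \<Rightarrow> ('r \<Rightarrow> nat) \<Rightarrow> ('f,'r) qid set \<Rightarrow> bool" where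
  "qe_theory af ar T = (Cn af ar T = T)"

definition QTheories :: "('f \<Rightarrow> nat) \<Rightarrow> ('r \<Rightarrow> nat) \<Rightarrow> ('f,'r) qid set \<Rightarrow> nat \<Rightarrow> ('f,'r) qid set set" where
  "QTheories af ar Sig n = {T. qe_theory af ar T \<and> Cn af ar Sig \<subseteq> T \<and>
     (\<exists>Phi. (\<forall>q\<in>Phi. wf_qid af ar q \<and> card (qvars q) \<le> n) \<and> T = Cn af ar (Sig \<union> Phi))}"

definition Tn :: "('f \<Rightarrow> nat) \<Rightarrow> nat \<Rightarrow> ('f,nat) trm set" where
  "Tn af n = {t. wf_trm af t \<and> tvars t \<subseteq> {..<n}}"

definition fcls :: "('f \<Rightarrow> nat) \<Rightarrow> ('r \<Rightarrow> nat) \<Rightarrow> ('f,'r) qid set \<Rightarrow> nat \<Rightarrow> ('f,nat) trm \<Rightarrow> ('f,nat) trm set" where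
  "fcls af ar Sig n t = {s \<in> Tn af n. ([], Eq s t) \<in> Cn af ar Sig}"

definition Free :: "('f \<Rightarrow> nat) \<Rightarrow> ('r \<Rightarrow> nat) \<Rightarrow> ('f,'r) qid set \<Rightarrow> nat \<Rightarrow> (('f,nat) trm set,'f,'r) struc" where
  "Free af ar Sig n =
     \<lparr> carrier = fcls af ar Sig n ` Tn af n,
       fnc = (\<lambda>f Xs. fcls af ar Sig n (Fn f (map (\<lambda>X. SOME t. t \<in> X) Xs))),
       rel = (\<lambda>r. {map (fcls af ar Sig n) ts | ts. set ts \<subseteq> Tn af n \<and> length ts = ar r \<and>
                     ([], Rel r ts) \<in> Cn af ar Sig}) \<rparr>"

type_synonym ('a,'r) cong = "('a \<times> 'a) set \<times> ('r \<Rightarrow> 'a list set)"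

definition is_cong :: "('f \<Rightarrow> nat) \<Rightarrow> ('r \<Rightarrow> nat) \<Rightarrow> ('a,'f,'r) struc \<Rightarrow> ('a,'r) cong \<Rightarrow> bool" where
  "is_cong af ar A th =
     (equiv (carrier A) (fst th) \<and>
      (\<forall>f xs ys. length xs = af f \<and> list_all2 (\<lambda>x y. (x,y) \<in> fst th) xs ys \<longrightarrow>
                 (fnc A f xs, fnc A f ys) \<in> fst th) \<and>
      (\<forall>r. rel A r \<subseteq> snd th r \<and>
           snd th r \<subseteq> {xs. set xs \<subseteq> carrier A \<and> length xs = ar r} \<and>
           (\<forall>xs ys. xs \<in> snd th r \<and> list_all2 (\<lambda>x y. (x,y) \<in> fst th) xs ys \<longrightarrow> ys \<in> snd th r)))"

definition quot :: "('a,'f,'r) struc \<Rightarrow> ('a,'r) cong \<Rightarrow> ('a set,'f,'r) struc" where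
  "quot A th =
     \<lparr> carrier = carrier A // fst th,
       fnc = (\<lambda>f Xs. fst th `` {fnc A f (map (\<lambda>X. SOME x. x \<in> X) Xs)}),
       rel = (\<lambda>r. {map (\<lambda>x. fst th `` {x}) xs | xs. xs \<in> snd th r}) \<rparr>"

definition ConK :: "('f \<Rightarrow> nat) \<Rightarrow> ('r \<Rightarrow> nat) \<Rightarrow> ('f,'r) qid set \<Rightarrow> ('a,'f,'r) struc \<Rightarrow> ('a,'r) cong set" where
  "ConK af ar Sig A = {th. is_cong af ar A th \<and> model af ar Sig (quot A th)}"

definition cle :: "('a,'r) cong \<Rightarrow> ('a,'r) cong \<Rightarrow> bool" where
  "cle th ps = (fst th \<subseteq> fst ps \<and> (\<forall>r. snd th r \<subseteq> snd ps r))"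

definition is_lub :: "('a,'r) cong set \<Rightarrow> ('a,'r) cong set \<Rightarrow> ('a,'r) cong \<Rightarrow> bool" where
  "is_lub L S u = (u \<in> L \<and> (\<forall>x\<in>S. cle x u) \<and> (\<forall>v\<in>L. (\<forall>x\<in>S. cle x v) \<longrightarrow> cle u v))"

definition lub :: "('a,'r) cong set \<Rightarrow> ('a,'r) cong set \<Rightarrow> ('a,'r) cong" where
  "lub L S = (THE u. is_lub L S u)"

definition compact :: "('a,'r) cong set \<Rightarrow> ('a,'r) cong \<Rightarrow> bool" where
  "compact L x = (x \<in> L \<and> (\<forall>S. S \<subseteq> L \<longrightarrow> cle x (lub L S) \<longrightarrow>
                     (\<exists>S'. S' \<subseteq> S \<and> finite S' \<and> cle x (lub L S'))))"

datatype ('a,'r) fatom = FEq 'a 'a | FRel 'r "'a list"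

fun fatom_in :: "('a,'r) cong \<Rightarrow> ('a,'r) fatom \<Rightarrow> bool" where
  "fatom_in th (FEq a b) = ((a,b) \<in> fst th)"
| "fatom_in th (FRel r xs) = (xs \<in> snd th r)"

fun fatom_over :: "('r \<Rightarrow> nat) \<Rightarrow> ('a,'f,'r) struc \<Rightarrow> ('a,'r) fatom \<Rightarrow> bool" where
  "fatom_over ar A (FEq a b) = (a \<in> carrier A \<and> b \<in> carrier A)"
| "fatom_over ar A (FRel r xs) = (set xs \<subseteq> carrier A \<and> length xs = ar r)"

fun fatom_map :: "('a \<Rightarrow> 'a) \<Rightarrow> ('a,'r) fatom \<Rightarrow> ('a,'r) fatom" where
  "fatom_map e (FEq a b) = FEq (e a) (e b)"
| "fatom_map e (FRel r xs) = FRel r (map e xs)"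

definition pcon :: "('a,'r) cong set \<Rightarrow> ('a,'r) fatom \<Rightarrow> ('a,'r) cong" where
  "pcon L al = (THE th. th \<in> L \<and> fatom_in th al \<and> (\<forall>ps\<in>L. fatom_in ps al \<longrightarrow> cle th ps))"

definition is_hom :: "('f \<Rightarrow> nat) \<Rightarrow> ('a,'f,'r) struc \<Rightarrow> ('b,'f,'r) struc \<Rightarrow> ('a \<Rightarrow> 'b) \<Rightarrow> bool" where
  "is_hom af A B h =
     ((\<forall>x\<in>carrier A. h x \<in> carrier B) \<and>
      (\<forall>f xs. set xs \<subseteq> carrier A \<and> length xs = af f \<longrightarrow> h (fnc A f xs) = fnc B f (map h xs)) \<and>
      (\<forall>r xs. xs \<in> rel A r \<longrightarrow> map h xs \<in> rel B r))"

text \<open>hat-epsilon: hat e (join_j con alpha_j) = join_j con (e alpha_j).\<close>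
definition hat :: "('r \<Rightarrow> nat) \<Rightarrow> ('a,'f,'r) struc \<Rightarrow> ('a,'r) cong set \<Rightarrow> ('a \<Rightarrow> 'a) \<Rightarrow> ('a,'r) cong \<Rightarrow> ('a,'r) cong" where
  "hat ar A L e ph = (THE ps. \<exists>als. (\<forall>al\<in>set als. fatom_over ar A al) \<and>
       ph = lub L (pcon L ` set als) \<and> ps = lub L (pcon L ` fatom_map e ` set als))"

definition TnK :: "('f \<Rightarrow> nat) \<Rightarrow> ('r \<Rightarrow> nat) \<Rightarrow> ('f,'r) qid set \<Rightarrow> nat \<Rightarrow> (('f,nat) trm set,'r) cong set" where
  "TnK af ar Sig n = {x. compact (ConK af ar Sig (Free af ar Sig n)) x}"

definition ConSn :: "('f \<Rightarrow> nat) \<Rightarrow> ('r \<Rightarrow> nat) \<Rightarrow> ('f,'r) qid set \<Rightarrow> nat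
     \<Rightarrow> ((('f,nat) trm set,'r) cong \<times> (('f,nat) trm set,'r) cong) set set" where
  "ConSn af ar Sig n =
    (let F = Free af ar Sig n; L = ConK af ar Sig F; T = TnK af ar Sig n in
     {E. equiv T E \<and>
         (\<forall>a b c d. (a,b) \<in> E \<and> (c,d) \<in> E \<longrightarrow> (lub L {a,c}, lub L {b,d}) \<in> E) \<and>
         (\<forall>e. is_hom af F F e \<longrightarrow> (\<forall>a b. (a,b) \<in> E \<longrightarrow> (hat ar F L e a, hat ar F L e b) \<in> E))})"

end

theory Submission
  imports Defs
begin

text \<open>
  After renaming its variables, a quasi-identity in at most \<open>n\<close> variables is one in
  \<open>x\<^sub>0, \<dots>, x\<^sub>n\<^sub>-\<^sub>1\<close>, and \<open>ps \<Rightarrow> b\<close> belongs to a theory \<open>T \<supseteq> Th(K)\<close> iff \<open>b\<close>, read in the free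
  structure \<open>F = F\<^sub>K(n)\<close>, lies in the \<open>T\<close>-congruence of \<open>F\<close> generated by \<open>ps\<close>. So such a \<open>T\<close> is
  determined by the relation \<open>\<theta>\<^sub>T\<close> on compact \<open>K\<close>-congruences that identifies two of them when they
  generate the same \<open>T\<close>-congruence. It is compatible with joins, and with every operator \<open>hat \<epsilon>\<close> because
  \<open>T\<close>-congruences pull back along endomorphisms of \<open>F\<close>. Conversely, a congruence \<open>E\<close> of \<open>S\<^sub>n\<close> equals
  \<open>\<theta>\<^sub>T\<close> for the theory \<open>T\<close> axiomatised by all \<open>ps \<Rightarrow> b\<close> with \<open>con ps E con ps \<or> con b\<close>: the part
  of the \<open>E\<close>-class of \<open>a\<close> above \<open>a\<close> is updirected, and the union of its atoms is closed under
  these axioms because their substitution instances are images under the operators \<open>hat \<epsilon>\<close>.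
\<close>

section \<open>Congruences as sets of atoms\<close>

fun eval_atom :: "('a,'f,'r) struc \<Rightarrow> ('v \<Rightarrow> 'a) \<Rightarrow> ('f,'r,'v) atom \<Rightarrow> ('a,'r) fatom" where
  "eval_atom A k (Eq s t) = FEq (eval A k s) (eval A k t)"
| "eval_atom A k (Rel r ts) = FRel r (map (eval A k) ts)"

definition fatoms :: "('r \<Rightarrow> nat) \<Rightarrow> ('a,'f,'r) struc \<Rightarrow> ('a,'r) fatom set" where
  "fatoms ar A = {al. fatom_over ar A al}"

lemma fatoms_simps [simp]:
  "FEq x y \<in> fatoms ar A \<longleftrightarrow> x \<in> carrier A \<and> y \<in> carrier A"
  "FRel r xs \<in> fatoms ar A \<longleftrightarrow> set xs \<subseteq> carrier A \<and> length xs = ar r"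
  by (auto simp: fatoms_def)

text \<open>A congruence is handled through the set of atomic facts it makes true; \<open>is_cong_set\<close> below
  characterises the sets of atoms that arise in this way.\<close>
definition atoms :: "('a,'r) cong \<Rightarrow> ('a,'r) fatom set" where
  "atoms th = {al. fatom_in th al}"

definition cong_of :: "('a,'r) fatom set \<Rightarrow> ('a,'r) cong" where
  "cong_of D = ({(x,y). FEq x y \<in> D}, \<lambda>r. {xs. FRel r xs \<in> D})"

lemma atoms_cong_of [simp]: "atoms (cong_of D) = D"
proof -
  have "fatom_in (cong_of D) al \<longleftrightarrow> al \<in> D" for al by (cases al) (auto simp: cong_of_def)
  thus ?thesis by (auto simp: atoms_def)
qed

lemma cong_of_atoms [simp]: "cong_of (atoms th) = th"
  by (cases th) (auto simp: cong_of_def atoms_def)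

lemma atoms_inject: "atoms th = atoms ps \<longleftrightarrow> th = ps"
  by (metis cong_of_atoms)

lemma atoms_simps [simp]:
  "FEq x y \<in> atoms th \<longleftrightarrow> (x,y) \<in> fst th"
  "FRel r xs \<in> atoms th \<longleftrightarrow> xs \<in> snd th r"
  by (simp_all add: atoms_def)

lemma cle_iff_atoms: "cle th ps \<longleftrightarrow> atoms th \<subseteq> atoms ps"
proof
  assume "atoms th \<subseteq> atoms ps"
  hence "FEq x y \<in> atoms th \<Longrightarrow> FEq x y \<in> atoms ps" "FRel r xs \<in> atoms th \<Longrightarrow> FRel r xs \<in> atoms ps"
    for x y r xs by blast+
  thus "cle th ps" by (auto simp: cle_def)
next
  assume "cle th ps"
  hence "fatom_in th al \<Longrightarrow> fatom_in ps al" for al by (cases al) (auto simp: cle_def)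
  thus "atoms th \<subseteq> atoms ps" by (auto simp: atoms_def)
qed

definition is_cong_set :: "('f \<Rightarrow> nat) \<Rightarrow> ('r \<Rightarrow> nat) \<Rightarrow> ('a,'f,'r) struc \<Rightarrow> ('a,'r) fatom set \<Rightarrow> bool" where
  "is_cong_set af ar A D \<longleftrightarrow> D \<subseteq> fatoms ar A \<and> (\<forall>x\<in>carrier A. FEq x x \<in> D) \<and>
     (\<forall>x y. FEq x y \<in> D \<longrightarrow> FEq y x \<in> D) \<and>
     (\<forall>x y z. FEq x y \<in> D \<longrightarrow> FEq y z \<in> D \<longrightarrow> FEq x z \<in> D) \<and>
     (\<forall>f xs ys. length xs = af f \<and> list_all2 (\<lambda>x y. FEq x y \<in> D) xs ys \<longrightarrow>
        FEq (fnc A f xs) (fnc A f ys) \<in> D) \<and>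
     (\<forall>r xs. xs \<in> rel A r \<longrightarrow> FRel r xs \<in> D) \<and>
     (\<forall>r xs ys. FRel r xs \<in> D \<and> list_all2 (\<lambda>x y. FEq x y \<in> D) xs ys \<longrightarrow> FRel r ys \<in> D)"

definition closed_under :: "('f,'r) qid set \<Rightarrow> ('a,'f,'r) struc \<Rightarrow> ('a,'r) fatom set \<Rightarrow> bool" where
  "closed_under X A D \<longleftrightarrow> (\<forall>q\<in>X. \<forall>k. range k \<subseteq> carrier A \<longrightarrow>
     (\<forall>p\<in>set (fst q). eval_atom A k p \<in> D) \<longrightarrow> eval_atom A k (snd q) \<in> D)"

lemma is_cong_setD:
  assumes "is_cong_set af ar A D"
  shows "D \<subseteq> fatoms ar A"
    and "x \<in> carrier A \<Longrightarrow> FEq x x \<in> D"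
    and "FEq x y \<in> D \<Longrightarrow> FEq y x \<in> D"
    and "FEq x y \<in> D \<Longrightarrow> FEq y z \<in> D \<Longrightarrow> FEq x z \<in> D"
    and "length xs = af f \<Longrightarrow> list_all2 (\<lambda>x y. FEq x y \<in> D) xs ys \<Longrightarrow>
      FEq (fnc A f xs) (fnc A f ys) \<in> D"
    and "xs \<in> rel A r \<Longrightarrow> FRel r xs \<in> D"
    and "FRel r xs \<in> D \<Longrightarrow> list_all2 (\<lambda>x y. FEq x y \<in> D) xs ys \<Longrightarrow> FRel r ys \<in> D"
  using assms unfolding is_cong_set_def by blast+

lemma is_cong_setI:
  assumes "D \<subseteq> fatoms ar A"
    and "\<And>x. x \<in> carrier A \<Longrightarrow> FEq x x \<in> D"
    and "\<And>x y. FEq x y \<in> D \<Longrightarrow> FEq y x \<in> D"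
    and "\<And>x y z. FEq x y \<in> D \<Longrightarrow> FEq y z \<in> D \<Longrightarrow> FEq x z \<in> D"
    and "\<And>f xs ys. length xs = af f \<Longrightarrow> list_all2 (\<lambda>x y. FEq x y \<in> D) xs ys \<Longrightarrow>
      FEq (fnc A f xs) (fnc A f ys) \<in> D"
    and "\<And>r xs. xs \<in> rel A r \<Longrightarrow> FRel r xs \<in> D"
    and "\<And>r xs ys. FRel r xs \<in> D \<Longrightarrow> list_all2 (\<lambda>x y. FEq x y \<in> D) xs ys \<Longrightarrow> FRel r ys \<in> D"
  shows "is_cong_set af ar A D"
  unfolding is_cong_set_def using assms by blast

lemma closed_underD:
  assumes "closed_under X A D" "q \<in> X" "range k \<subseteq> carrier A"
    "\<And>p. p \<in> set (fst q) \<Longrightarrow> eval_atom A k p \<in> D"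
  shows "eval_atom A k (snd q) \<in> D"
  using assms unfolding closed_under_def by blast

lemma closed_under_Un: "closed_under (X \<union> Y) A D \<longleftrightarrow> closed_under X A D \<and> closed_under Y A D"
  unfolding closed_under_def by blast

lemma closed_under_mono: "closed_under Y A D \<Longrightarrow> X \<subseteq> Y \<Longrightarrow> closed_under X A D"
  unfolding closed_under_def by blast

lemma is_congD:
  assumes "is_cong af ar A th"
  shows "equiv (carrier A) (fst th)"
    and "length xs = af f \<Longrightarrow> list_all2 (\<lambda>x y. (x,y) \<in> fst th) xs ys \<Longrightarrow>
      (fnc A f xs, fnc A f ys) \<in> fst th"
    and "xs \<in> rel A r \<Longrightarrow> xs \<in> snd th r"
    and "xs \<in> snd th r \<Longrightarrow> set xs \<subseteq> carrier A \<and> length xs = ar r"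
    and "xs \<in> snd th r \<Longrightarrow> list_all2 (\<lambda>x y. (x,y) \<in> fst th) xs ys \<Longrightarrow> ys \<in> snd th r"
  using assms unfolding is_cong_def by blast+

lemma is_cong_iff_is_cong_set: "is_cong af ar A th \<longleftrightarrow> is_cong_set af ar A (atoms th)"
proof
  assume c: "is_cong af ar A th"
  have eq: "equiv (carrier A) (fst th)" by (fact is_congD(1)[OF c])
  show "is_cong_set af ar A (atoms th)"
  proof (rule is_cong_setI)
    show "atoms th \<subseteq> fatoms ar A"
    proof
      fix al assume "al \<in> atoms th"
      thus "al \<in> fatoms ar A"
        using is_congD(4)[OF c] equiv_type[OF eq] by (cases al) auto
    qed
  qed (use eq is_congD(2,3,5)[OF c] in \<open>auto simp: equiv_def refl_on_def dest: symD transD\<close>)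
next
  assume s: "is_cong_set af ar A (atoms th)"
  have "fst th \<subseteq> carrier A \<times> carrier A" "snd th r \<subseteq> {xs. set xs \<subseteq> carrier A \<and> length xs = ar r}"
    for r
  proof -
    have "FEq x y \<in> fatoms ar A" if "(x,y) \<in> fst th" for x y
      using that is_cong_setD(1)[OF s] atoms_simps(1)[of x y th] by blast
    moreover have "FRel r xs \<in> fatoms ar A" if "xs \<in> snd th r" for xs
      using that is_cong_setD(1)[OF s] atoms_simps(2)[of r xs th] by blast
    ultimately show "fst th \<subseteq> carrier A \<times> carrier A"
      "snd th r \<subseteq> {xs. set xs \<subseteq> carrier A \<and> length xs = ar r}" by auto
  qed
  moreover have "equiv (carrier A) (fst th)"
  proof (rule equivI)
    show "fst th \<subseteq> carrier A \<times> carrier A" by (fact calculation(1))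
    show "refl_on (carrier A) (fst th)" using is_cong_setD(2)[OF s] by (auto simp: refl_on_def)
    show "sym (fst th)" using is_cong_setD(3)[OF s] by (auto intro: symI)
    show "trans (fst th)" using is_cong_setD(4)[OF s] by (auto intro: transI)
  qed
  moreover have "\<forall>f xs ys. length xs = af f \<and> list_all2 (\<lambda>x y. (x,y) \<in> fst th) xs ys \<longrightarrow>
      (fnc A f xs, fnc A f ys) \<in> fst th"
    using is_cong_setD(5)[OF s] by simp
  moreover have "\<forall>r. rel A r \<subseteq> snd th r \<and> (\<forall>xs ys. xs \<in> snd th r \<and>
      list_all2 (\<lambda>x y. (x,y) \<in> fst th) xs ys \<longrightarrow> ys \<in> snd th r)"
    using is_cong_setD(6,7)[OF s] by auto
  ultimately show "is_cong af ar A th" unfolding is_cong_def by blast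
qed

lemma is_strucD:
  assumes "is_struc af ar A"
  shows "carrier A \<noteq> {}"
    and "set xs \<subseteq> carrier A \<Longrightarrow> length xs = af f \<Longrightarrow> fnc A f xs \<in> carrier A"
    and "xs \<in> rel A r \<Longrightarrow> set xs \<subseteq> carrier A \<and> length xs = ar r"
  using assms unfolding is_struc_def by blast+

lemma is_homD:
  assumes "is_hom af A B h"
  shows "x \<in> carrier A \<Longrightarrow> h x \<in> carrier B"
    and "set xs \<subseteq> carrier A \<Longrightarrow> length xs = af f \<Longrightarrow> h (fnc A f xs) = fnc B f (map h xs)"
    and "xs \<in> rel A r \<Longrightarrow> map h xs \<in> rel B r"
  using assms unfolding is_hom_def by blast+

lemma eval_in_carrier:
  assumes "is_struc af ar A" "wf_trm af t" "\<forall>v. k v \<in> carrier A"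
  shows "eval A k t \<in> carrier A"
  using assms(2) by (induction t) (use assms(1,3) in \<open>auto intro!: is_strucD(2)\<close>)

lemma eval_atom_in_fatoms:
  assumes "is_struc af ar A" "wf_atom af ar a" "\<forall>v. k v \<in> carrier A"
  shows "eval_atom A k a \<in> fatoms ar A"
  using assms by (cases a) (auto intro: eval_in_carrier)

lemma eval_cong: "(\<forall>v\<in>tvars t. h v = k v) \<Longrightarrow> eval A h t = eval A k t"
proof (induction t)
  case (Fn f ts)
  hence "map (eval A h) ts = map (eval A k) ts" by (intro map_cong) auto
  thus ?case by (simp only: eval.simps)
qed simp

lemma holds_cong: "(\<forall>v\<in>avars a. h v = k v) \<Longrightarrow> holds A h a \<longleftrightarrow> holds A k a"
proof (cases a)
  case (Rel r ts)
  moreover assume "\<forall>v\<in>avars a. h v = k v"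
  ultimately have "map (eval A h) ts = map (eval A k) ts" by (intro map_cong refl eval_cong) auto
  thus ?thesis using Rel by (simp only: holds.simps)
next
  case (Eq s t)
  moreover assume "\<forall>v\<in>avars a. h v = k v"
  ultimately have "eval A h s = eval A k s" "eval A h t = eval A k t" by (auto intro!: eval_cong)
  thus ?thesis using Eq by simp
qed

lemma some_in_class:
  assumes "equiv A r" "a \<in> A"
  shows "(a, SOME x. (a,x) \<in> r) \<in> r"
proof (rule someI)
  show "(a, a) \<in> r" using assms by (simp add: equiv_def refl_on_def)
qed

lemma eval_quot:
  assumes A: "is_struc af ar A" and c: "is_cong af ar A th" and "wf_trm af t"
    and k: "\<forall>v. k v \<in> carrier A"
  shows "eval (quot A th) (\<lambda>v. fst th `` {k v}) t = fst th `` {eval A k t}"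
  using assms(3)
proof (induction t)
  case (Fn f ts)
  have eq: "equiv (carrier A) (fst th)" using is_congD[OF c] by simp
  define xs where "xs = map (eval A k) ts"
  define ys where "ys = map (\<lambda>X. SOME x. x \<in> X) (map (\<lambda>x. fst th `` {x}) xs)"
  have "set xs \<subseteq> carrier A" using Fn eval_in_carrier[OF A _ k] by (auto simp: xs_def)
  hence "list_all2 (\<lambda>x y. (x,y) \<in> fst th) xs ys"
    by (auto simp: ys_def list_all2_map2 list_all2_same intro!: some_in_class[OF eq])
  moreover have "length xs = af f" using Fn by (simp add: xs_def)
  ultimately have "(fnc A f xs, fnc A f ys) \<in> fst th" using is_congD[OF c] by simp
  hence classes: "fst th `` {fnc A f ys} = fst th `` {fnc A f xs}"
    using eq by (metis equiv_class_eq_iff)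
  have "map (eval (quot A th) (\<lambda>v. fst th `` {k v})) ts = map (\<lambda>x. fst th `` {x}) xs"
    using Fn by (simp add: xs_def)
  hence "eval (quot A th) (\<lambda>v. fst th `` {k v}) (Fn f ts) = fnc (quot A th) f (map (\<lambda>x. fst th `` {x}) xs)"
    by (simp only: eval.simps)
  also have "\<dots> = fst th `` {fnc A f ys}" by (simp only: quot_def ys_def struc.simps)
  also note classes
  finally show ?case by (simp only: xs_def eval.simps)
qed simp

lemma carrier_quot [simp]: "carrier (quot A th) = carrier A // fst th"
  and rel_quot [simp]: "rel (quot A th) r = {map (\<lambda>x. fst th `` {x}) xs | xs. xs \<in> snd th r}"
  by (simp_all add: quot_def)

lemma map_class_eq_iff:
  assumes r: "equiv A r" and "set xs \<subseteq> A" "set ys \<subseteq> A"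
  shows "map (\<lambda>x. r `` {x}) xs = map (\<lambda>x. r `` {x}) ys \<longleftrightarrow> list_all2 (\<lambda>x y. (x,y) \<in> r) xs ys"
  using assms(2,3)
proof (induction xs arbitrary: ys)
  case (Cons x xs)
  thus ?case by (cases ys) (auto simp: eq_equiv_class_iff[OF r])
qed auto

lemma holds_quot:
  assumes A: "is_struc af ar A" and c: "is_cong af ar A th" and w: "wf_atom af ar a"
    and k: "\<forall>v. k v \<in> carrier A"
  shows "holds (quot A th) (\<lambda>v. fst th `` {k v}) a \<longleftrightarrow> eval_atom A k a \<in> atoms th"
proof (cases a)
  case (Eq s t)
  hence "wf_trm af s" "wf_trm af t" using w by auto
  thus ?thesis
    using Eq eval_quot[OF A c _ k] eq_equiv_class_iff[OF is_congD(1)[OF c] eval_in_carrier[OF A _ k]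
        eval_in_carrier[OF A _ k]]
    by simp
next
  case (Rel r ts)
  have eq: "equiv (carrier A) (fst th)" using is_congD[OF c] by simp
  define xs where "xs = map (eval A k) ts"
  have xs: "set xs \<subseteq> carrier A" using w Rel eval_in_carrier[OF A _ k] by (auto simp: xs_def)
  have "map (eval (quot A th) (\<lambda>v. fst th `` {k v})) ts = map (\<lambda>x. fst th `` {x}) xs"
    using w Rel eval_quot[OF A c _ k] by (simp add: xs_def)
  hence "holds (quot A th) (\<lambda>v. fst th `` {k v}) a \<longleftrightarrow>
      (\<exists>ys\<in>snd th r. map (\<lambda>x. fst th `` {x}) ys = map (\<lambda>x. fst th `` {x}) xs)"
    using Rel by (auto simp del: map_eq_conv) (metis map_eq_conv)
  also have "\<dots> \<longleftrightarrow> (\<exists>ys\<in>snd th r. list_all2 (\<lambda>x y. (x,y) \<in> fst th) ys xs)"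
    by (intro bex_cong refl map_class_eq_iff[OF eq _ xs]) (use is_congD(4)[OF c] in blast)
  also have "\<dots> \<longleftrightarrow> xs \<in> snd th r"
  proof
    assume "\<exists>ys\<in>snd th r. list_all2 (\<lambda>x y. (x,y) \<in> fst th) ys xs"
    thus "xs \<in> snd th r" using is_congD(5)[OF c] by blast
  next
    assume "xs \<in> snd th r"
    moreover have "list_all2 (\<lambda>x y. (x,y) \<in> fst th) xs xs"
      using xs eq by (auto simp: list_all2_same equiv_def refl_on_def)
    ultimately show "\<exists>ys\<in>snd th r. list_all2 (\<lambda>x y. (x,y) \<in> fst th) ys xs" by blast
  qed
  finally show ?thesis using Rel by (simp add: xs_def)
qed

lemma is_struc_quot:
  assumes A: "is_struc af ar A" and c: "is_cong af ar A th"
  shows "is_struc af ar (quot A th)"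
proof -
  have eq: "equiv (carrier A) (fst th)" using is_congD[OF c] by simp
  have some: "(SOME x. x \<in> X) \<in> carrier A" if "X \<in> carrier A // fst th" for X
    using that in_quotient_imp_non_empty[OF eq] in_quotient_imp_subset[OF eq]
      by (metis some_in_eq subsetD)
  have "fnc (quot A th) f Xs \<in> carrier (quot A th)"
    if "set Xs \<subseteq> carrier (quot A th)" "length Xs = af f" for f Xs
    using that some is_strucD(2)[OF A, of "map (\<lambda>X. SOME x. x \<in> X) Xs" f]
    by (auto simp: quot_def intro!: quotientI)
  moreover have "set xs \<subseteq> carrier A" "length xs = ar r" if "xs \<in> snd th r" for xs r
    using that is_congD(4)[OF c] by auto
  ultimately show ?thesis
    using is_strucD(1)[OF A] by (fastforce simp: is_struc_def intro: quotientI)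
qed

lemma sat_qid_quot_iff:
  assumes A: "is_struc af ar A" and c: "is_cong af ar A th" and w: "wf_qid af ar q"
  shows "sat_qid (quot A th) q \<longleftrightarrow> closed_under {q} A (atoms th)"
proof -
  have holds: "holds (quot A th) (\<lambda>v. fst th `` {k v}) a \<longleftrightarrow> eval_atom A k a \<in> atoms th"
    if "\<forall>v. k v \<in> carrier A" "a \<in> set (fst q) \<or> a = snd q" for k a
    using holds_quot[OF A c _ that(1)] that(2) w unfolding wf_qid_def by blast
  show ?thesis
  proof
    assume s: "sat_qid (quot A th) q"
    show "closed_under {q} A (atoms th)" unfolding closed_under_def
    proof (intro ballI allI impI)
      fix q' k assume q': "q' \<in> {q}" and "range k \<subseteq> carrier A"
        and p: "\<forall>p\<in>set (fst q'). eval_atom A k p \<in> atoms th"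
      hence k: "\<forall>v. k v \<in> carrier A" by auto
      hence "range (\<lambda>v. fst th `` {k v}) \<subseteq> carrier (quot A th)" by (auto intro: quotientI)
      moreover have "\<forall>p\<in>set (fst q). holds (quot A th) (\<lambda>v. fst th `` {k v}) p"
        using p q' holds[OF k] by simp
      ultimately have "holds (quot A th) (\<lambda>v. fst th `` {k v}) (snd q)"
        using s unfolding sat_qid_def by blast
      thus "eval_atom A k (snd q') \<in> atoms th" using q' holds[OF k] by simp
    qed
  next
    assume cl: "closed_under {q} A (atoms th)"
    show "sat_qid (quot A th) q" unfolding sat_qid_def
    proof (intro allI impI)
      fix h assume h: "range h \<subseteq> carrier (quot A th)"
        and p: "\<forall>p\<in>set (fst q). holds (quot A th) h p"
      have "\<exists>x. x \<in> carrier A \<and> h v = fst th `` {x}" for v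
      proof -
        have "h v \<in> carrier A // fst th" using h by auto
        thus ?thesis by (rule quotientE) blast
      qed
      then obtain k where k: "\<forall>v. k v \<in> carrier A" and hk: "h = (\<lambda>v. fst th `` {k v})"
        by metis
      have "eval_atom A k p \<in> atoms th" if "p \<in> set (fst q)" for p
        using p that holds[OF k] hk by simp
      hence "eval_atom A k (snd q) \<in> atoms th" using closed_underD[OF cl, of q k] k by blast
      thus "holds (quot A th) h (snd q)" using holds[OF k] hk by simp
    qed
  qed
qed

lemma ConK_iff:
  assumes A: "is_struc af ar A" and X: "\<forall>q\<in>X. wf_qid af ar q"
  shows "th \<in> ConK af ar X A \<longleftrightarrow> is_cong_set af ar A (atoms th) \<and> closed_under X A (atoms th)"
proof (cases "is_cong af ar A th")
  case True
  have "closed_under X A (atoms th) \<longleftrightarrow> (\<forall>q\<in>X. closed_under {q} A (atoms th))"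
    by (auto simp: closed_under_def)
  also have "\<dots> \<longleftrightarrow> (\<forall>q\<in>X. sat_qid (quot A th) q)"
    using sat_qid_quot_iff[OF A True] X by blast
  finally show ?thesis
    using True is_struc_quot[OF A True] by (simp add: ConK_def model_def is_cong_iff_is_cong_set)
qed (simp add: ConK_def is_cong_iff_is_cong_set)

section \<open>Intersections, directed unions and preimages of congruence sets\<close>

lemma list_all2_fatoms:
  assumes "list_all2 (\<lambda>x y. FEq x y \<in> D) xs ys" "D \<subseteq> fatoms ar A"
  shows "set xs \<subseteq> carrier A" "set ys \<subseteq> carrier A" "length ys = length xs"
  using assms(1) by (induction rule: list_all2_induct) (use assms(2) in auto)

lemma fatoms_cong_set:
  assumes A: "is_struc af ar A" and X: "\<forall>q\<in>X. wf_qid af ar q"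
  shows "is_cong_set af ar A (fatoms ar A) \<and> closed_under X A (fatoms ar A)"
proof
  show "is_cong_set af ar A (fatoms ar A)"
  proof (rule is_cong_setI)
    fix f xs ys assume l: "length xs = af f" and "list_all2 (\<lambda>x y. FEq x y \<in> fatoms ar A) xs ys"
    from list_all2_fatoms[OF this(2) subset_refl] l
    show "FEq (fnc A f xs) (fnc A f ys) \<in> fatoms ar A" using is_strucD(2)[OF A] by simp
  next
    fix r xs ys assume "FRel r xs \<in> fatoms ar A" and la: "list_all2 (\<lambda>x y. FEq x y \<in> fatoms ar A) xs ys"
    thus "FRel r ys \<in> fatoms ar A" using list_all2_fatoms[OF la subset_refl] by simp
  qed (use is_strucD(3)[OF A] in simp_all)
  show "closed_under X A (fatoms ar A)" unfolding closed_under_def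
  proof (intro ballI allI impI)
    fix q and k :: "nat \<Rightarrow> _" assume "q \<in> X" "range k \<subseteq> carrier A"
    thus "eval_atom A k (snd q) \<in> fatoms ar A"
      using X by (intro eval_atom_in_fatoms[OF A]) (auto simp: wf_qid_def)
  qed
qed

lemma Inter_cong_set:
  assumes ne: "\<D> \<noteq> {}" and all: "\<And>D. D \<in> \<D> \<Longrightarrow> is_cong_set af ar A D \<and> closed_under X A D"
  shows "is_cong_set af ar A (\<Inter>\<D>) \<and> closed_under X A (\<Inter>\<D>)"
proof
  have sD: "is_cong_set af ar A D" and cD: "closed_under X A D" if "D \<in> \<D>" for D
    using all[OF that] by blast+
  have la: "list_all2 (\<lambda>x y. FEq x y \<in> D) xs ys"
    if "list_all2 (\<lambda>x y. FEq x y \<in> \<Inter>\<D>) xs ys" "D \<in> \<D>" for xs ys D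
    using that by (auto elim: list_all2_mono)
  show "is_cong_set af ar A (\<Inter>\<D>)"
  proof (rule is_cong_setI)
    show "\<Inter>\<D> \<subseteq> fatoms ar A" using ne is_cong_setD(1)[OF sD] by blast
  next
    fix f xs ys assume "length xs = af f" "list_all2 (\<lambda>x y. FEq x y \<in> \<Inter>\<D>) xs ys"
    thus "FEq (fnc A f xs) (fnc A f ys) \<in> \<Inter>\<D>" using is_cong_setD(5)[OF sD] la by blast
  next
    fix r xs ys assume "FRel r xs \<in> \<Inter>\<D>" "list_all2 (\<lambda>x y. FEq x y \<in> \<Inter>\<D>) xs ys"
    thus "FRel r ys \<in> \<Inter>\<D>" using is_cong_setD(7)[OF sD] la by blast
  qed (auto intro: is_cong_setD(2-4,6)[OF sD])
  show "closed_under X A (\<Inter>\<D>)"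
    using cD unfolding closed_under_def by blast
qed

definition updirected :: "'a set set \<Rightarrow> bool" where
  "updirected \<D> \<longleftrightarrow> \<D> \<noteq> {} \<and> (\<forall>D1\<in>\<D>. \<forall>D2\<in>\<D>. \<exists>D3\<in>\<D>. D1 \<union> D2 \<subseteq> D3)"

lemma updirected_finite_subset:
  assumes dir: "updirected \<D>" and "finite W" "W \<subseteq> \<Union>\<D>"
  shows "\<exists>D\<in>\<D>. W \<subseteq> D"
  using assms(2,3)
proof (induction W rule: finite_induct)
  case empty thus ?case using dir by (auto simp: updirected_def)
next
  case (insert w W)
  then obtain D1 D2 where "D1 \<in> \<D>" "W \<subseteq> D1" "D2 \<in> \<D>" "w \<in> D2" by blast
  moreover obtain D3 where "D3 \<in> \<D>" "D1 \<union> D2 \<subseteq> D3"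
    using dir calculation unfolding updirected_def by blast
  ultimately show ?case by blast
qed

lemma updirected_list_all2:
  fixes \<D> :: "('a,'r) fatom set set"
  assumes dir: "updirected \<D>" and la: "list_all2 (\<lambda>x y. FEq x y \<in> \<Union>\<D>) xs ys"
    and "finite W" "W \<subseteq> \<Union>\<D>"
  shows "\<exists>D\<in>\<D>. list_all2 (\<lambda>x y. FEq x y \<in> D) xs ys \<and> W \<subseteq> D"
proof -
  define V where "V = (\<lambda>(x,y). FEq x y :: ('a,'r) fatom) ` set (zip xs ys)"
  have "V \<union> W \<subseteq> \<Union>\<D>" "finite (V \<union> W)" using la assms(3,4) by (auto simp: V_def list_all2_iff)
  then obtain D where "D \<in> \<D>" "V \<union> W \<subseteq> D" using updirected_finite_subset[OF dir] by blast
  moreover have "list_all2 (\<lambda>x y. FEq x y \<in> D) xs ys"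
    using la calculation(2) by (auto simp: V_def list_all2_iff)
  ultimately show ?thesis by blast
qed

lemma updirected_Union_is_cong_set:
  assumes dir: "updirected \<D>" and sD: "\<And>D. D \<in> \<D> \<Longrightarrow> is_cong_set af ar A D"
  shows "is_cong_set af ar A (\<Union>\<D>)"
proof (rule is_cong_setI)
  obtain D0 where D0: "D0 \<in> \<D>" using dir by (auto simp: updirected_def)
  show "\<Union>\<D> \<subseteq> fatoms ar A" using is_cong_setD(1)[OF sD] by (rule Union_least)
  show "x \<in> carrier A \<Longrightarrow> FEq x x \<in> \<Union>\<D>" for x using is_cong_setD(2)[OF sD[OF D0]] D0 by blast
  show "FEq y x \<in> \<Union>\<D>" if xy: "FEq x y \<in> \<Union>\<D>" for x y
  proof -
    obtain D where "D \<in> \<D>" "FEq x y \<in> D" using xy by blast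
    thus ?thesis using is_cong_setD(3)[OF sD] by blast
  qed
  show "xs \<in> rel A r \<Longrightarrow> FRel r xs \<in> \<Union>\<D>" for r xs using is_cong_setD(6)[OF sD[OF D0]] D0 by blast
next
  fix x y z assume "FEq x y \<in> \<Union>\<D>" "FEq y z \<in> \<Union>\<D>"
  hence "{FEq x y, FEq y z} \<subseteq> \<Union>\<D>" by blast
  then obtain D where D: "D \<in> \<D>" "{FEq x y, FEq y z} \<subseteq> D"
    using updirected_finite_subset[OF dir finite.insertI[OF finite.insertI[OF finite.emptyI]]]
      by blast
  hence "FEq x z \<in> D" by (intro is_cong_setD(4)[OF sD[OF D(1)], of x y z]) auto
  thus "FEq x z \<in> \<Union>\<D>" using D(1) by blast
next
  fix f xs ys assume l: "length xs = af f" and a: "list_all2 (\<lambda>x y. FEq x y \<in> \<Union>\<D>) xs ys"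
  obtain D where D: "D \<in> \<D>" "list_all2 (\<lambda>x y. FEq x y \<in> D) xs ys"
    using updirected_list_all2[OF dir a finite.emptyI empty_subsetI] by blast
  thus "FEq (fnc A f xs) (fnc A f ys) \<in> \<Union>\<D>" using is_cong_setD(5)[OF sD[OF D(1)] l D(2)] by blast
next
  fix r xs ys assume "FRel r xs \<in> \<Union>\<D>" and a: "list_all2 (\<lambda>x y. FEq x y \<in> \<Union>\<D>) xs ys"
  hence "{FRel r xs} \<subseteq> \<Union>\<D>" by blast
  then obtain D where D: "D \<in> \<D>" "list_all2 (\<lambda>x y. FEq x y \<in> D) xs ys" "{FRel r xs} \<subseteq> D"
    using updirected_list_all2[OF dir a finite.insertI[OF finite.emptyI]] by blast
  thus "FRel r ys \<in> \<Union>\<D>" using is_cong_setD(7)[OF sD[OF D(1)] _ D(2)] by blast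
qed

lemma updirected_Union_closed_under:
  assumes dir: "updirected \<D>" and cD: "\<And>D. D \<in> \<D> \<Longrightarrow> closed_under X A D"
  shows "closed_under X A (\<Union>\<D>)"
  unfolding closed_under_def
proof (intro ballI allI impI)
  fix q and k :: "nat \<Rightarrow> _" assume q: "q \<in> X" and k: "range k \<subseteq> carrier A"
    and "\<forall>p\<in>set (fst q). eval_atom A k p \<in> \<Union>\<D>"
  hence "eval_atom A k ` set (fst q) \<subseteq> \<Union>\<D>" by blast
  then obtain D where D: "D \<in> \<D>" "eval_atom A k ` set (fst q) \<subseteq> D"
    using updirected_finite_subset[OF dir finite_imageI[OF finite_set]] by blast
  hence "eval_atom A k (snd q) \<in> D" using closed_underD[OF cD[OF D(1)] q k] by blast
  thus "eval_atom A k (snd q) \<in> \<Union>\<D>" using D by blast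
qed

lemma hom_eval:
  assumes A: "is_struc af ar A" and h: "is_hom af A B g" and t: "wf_trm af t"
    and k: "\<forall>v. k v \<in> carrier A"
  shows "g (eval A k t) = eval B (\<lambda>v. g (k v)) t"
  using t
proof (induction t)
  case (Var v) thus ?case by simp
next
  case (Fn f ts)
  have s: "set (map (eval A k) ts) \<subseteq> carrier A" using Fn eval_in_carrier[OF A _ k] by auto
  have l: "length (map (eval A k) ts) = af f" using Fn by simp
  have "g (eval A k (Fn f ts)) = fnc B f (map g (map (eval A k) ts))"
    using is_homD(2)[OF h s l] by simp
  also have "map g (map (eval A k) ts) = map (eval B (\<lambda>v. g (k v))) ts"
    unfolding map_map by (rule map_cong[OF refl]) (use Fn in auto)
  finally show ?case by simp
qed

lemma hom_eval_atom:
  assumes A: "is_struc af ar A" and h: "is_hom af A B g" and a: "wf_atom af ar a"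
    and k: "\<forall>v. k v \<in> carrier A"
  shows "fatom_map g (eval_atom A k a) = eval_atom B (\<lambda>v. g (k v)) a"
proof (cases a)
  case (Eq s t) thus ?thesis using a hom_eval[OF A h _ k] by simp
next
  case (Rel r ts)
  have "map g (map (eval A k) ts) = map (eval B (\<lambda>v. g (k v))) ts"
    unfolding map_map by (rule map_cong[OF refl]) (use a Rel hom_eval[OF A h _ k] in auto)
  thus ?thesis using Rel by simp
qed

lemma fatom_map_in_fatoms:
  assumes h: "is_hom af A B g" and "al \<in> fatoms ar A"
  shows "fatom_map g al \<in> fatoms ar B"
  using assms(2) is_homD(1)[OF h] by (cases al) auto

lemma is_cong_set_vimage:
  assumes A: "is_struc af ar A" and h: "is_hom af A B g" and D: "is_cong_set af ar B D"
  shows "is_cong_set af ar A {al \<in> fatoms ar A. fatom_map g al \<in> D}" (is "is_cong_set af ar A ?D")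
proof -
  have la: "list_all2 (\<lambda>x y. FEq x y \<in> D) (map g xs) (map g ys)"
    if "list_all2 (\<lambda>x y. FEq x y \<in> ?D) xs ys" for xs ys
    using that by (auto simp: list_all2_map1 list_all2_map2 elim: list_all2_mono)
  have sub: "?D \<subseteq> fatoms ar A" by blast
  show ?thesis
  proof (rule is_cong_setI)
    show "x \<in> carrier A \<Longrightarrow> FEq x x \<in> ?D" for x using is_cong_setD(2)[OF D] is_homD(1)[OF h] by simp
    show "FEq x y \<in> ?D \<Longrightarrow> FEq y x \<in> ?D" for x y using is_cong_setD(3)[OF D] by simp
    show "FEq x y \<in> ?D \<Longrightarrow> FEq y z \<in> ?D \<Longrightarrow> FEq x z \<in> ?D" for x y z
      using is_cong_setD(4)[OF D] by (simp, blast)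
    show "xs \<in> rel A r \<Longrightarrow> FRel r xs \<in> ?D" for r xs
      using is_strucD(3)[OF A] is_cong_setD(6)[OF D] is_homD(3)[OF h] by simp
  next
    fix f xs ys assume l: "length xs = af f" and a: "list_all2 (\<lambda>x y. FEq x y \<in> ?D) xs ys"
    have xs: "set xs \<subseteq> carrier A" and ys: "set ys \<subseteq> carrier A" and ly: "length ys = af f"
      using list_all2_fatoms[OF a sub] l by auto
    have "FEq (fnc B f (map g xs)) (fnc B f (map g ys)) \<in> D"
      using is_cong_setD(5)[OF D _ la[OF a]] l by simp
    thus "FEq (fnc A f xs) (fnc A f ys) \<in> ?D"
      using is_homD(2)[OF h xs l] is_homD(2)[OF h ys ly] is_strucD(2)[OF A] xs ys l ly by simp
  next
    fix r xs ys assume a1: "FRel r xs \<in> ?D" and a: "list_all2 (\<lambda>x y. FEq x y \<in> ?D) xs ys"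
    have "FRel r (map g ys) \<in> D" using is_cong_setD(7)[OF D _ la[OF a]] a1 by simp
    thus "FRel r ys \<in> ?D" using list_all2_fatoms[OF a sub] a1 by simp
  qed blast
qed

lemma closed_under_vimage:
  assumes A: "is_struc af ar A" and h: "is_hom af A B g" and X: "\<forall>q\<in>X. wf_qid af ar q"
    and D: "closed_under X B D"
  shows "closed_under X A {al \<in> fatoms ar A. fatom_map g al \<in> D}"
  unfolding closed_under_def
proof (intro ballI allI impI)
  fix q and k :: "nat \<Rightarrow> _" assume q: "q \<in> X" and "range k \<subseteq> carrier A"
    and p: "\<forall>p\<in>set (fst q). eval_atom A k p \<in> {al \<in> fatoms ar A. fatom_map g al \<in> D}"
  hence k: "\<forall>v. k v \<in> carrier A" by auto
  have wq: "\<forall>p\<in>set (fst q). wf_atom af ar p" "wf_atom af ar (snd q)"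
    using X q by (auto simp: wf_qid_def)
  have "range (\<lambda>v. g (k v)) \<subseteq> carrier B" using k is_homD(1)[OF h] by auto
  moreover have "eval_atom B (\<lambda>v. g (k v)) p \<in> D" if "p \<in> set (fst q)" for p
    using p that hom_eval_atom[OF A h _ k] wq by fastforce
  ultimately have "eval_atom B (\<lambda>v. g (k v)) (snd q) \<in> D" using closed_underD[OF D q] by blast
  thus "eval_atom A k (snd q) \<in> {al \<in> fatoms ar A. fatom_map g al \<in> D}"
    using hom_eval_atom[OF A h wq(2) k] eval_atom_in_fatoms[OF A wq(2) k] by simp
qed

definition true_atoms :: "('a,'f,'r) struc \<Rightarrow> ('a,'r) fatom set" where
  "true_atoms B = {FEq x x | x. x \<in> carrier B} \<union> {FRel r xs | r xs. xs \<in> rel B r}"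

lemma true_atoms_simps [simp]:
  "FEq x y \<in> true_atoms B \<longleftrightarrow> x = y \<and> x \<in> carrier B"
  "FRel r xs \<in> true_atoms B \<longleftrightarrow> xs \<in> rel B r"
  by (auto simp: true_atoms_def)

lemma holds_iff_true_atoms:
  assumes B: "is_struc af ar B" and a: "wf_atom af ar a" and k: "\<forall>v. k v \<in> carrier B"
  shows "holds B k a \<longleftrightarrow> eval_atom B k a \<in> true_atoms B"
  using a eval_in_carrier[OF B _ k] by (cases a) auto

lemma is_cong_set_true_atoms:
  assumes B: "is_struc af ar B"
  shows "is_cong_set af ar B (true_atoms B)"
proof (rule is_cong_setI)
  have eq: "list_all2 (\<lambda>x y. x = y \<and> x \<in> carrier B) xs ys \<longleftrightarrow> xs = ys \<and> set xs \<subseteq> carrier B"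
    for xs ys by (induction xs arbitrary: ys) (auto simp: list_all2_Cons1)
  show "true_atoms B \<subseteq> fatoms ar B"
  proof
    fix al assume "al \<in> true_atoms B" thus "al \<in> fatoms ar B"
      using is_strucD(3)[OF B] by (cases al) auto
  qed
  show "length xs = af f \<Longrightarrow> list_all2 (\<lambda>x y. FEq x y \<in> true_atoms B) xs ys \<Longrightarrow>
      FEq (fnc B f xs) (fnc B f ys) \<in> true_atoms B" for f xs ys
    using is_strucD(2)[OF B] by (auto simp: eq)
  show "FRel r xs \<in> true_atoms B \<Longrightarrow> list_all2 (\<lambda>x y. FEq x y \<in> true_atoms B) xs ys \<Longrightarrow>
      FRel r ys \<in> true_atoms B" for r xs ys by (simp add: eq)
qed auto

lemma closed_under_true_atoms:
  assumes B: "is_struc af ar B" and X: "\<forall>q\<in>X. wf_qid af ar q" and m: "\<forall>q\<in>X. sat_qid B q"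
  shows "closed_under X B (true_atoms B)"
  unfolding closed_under_def
proof (intro ballI allI impI)
  fix q and k :: "nat \<Rightarrow> _" assume q: "q \<in> X" and k: "range k \<subseteq> carrier B"
    and p: "\<forall>p\<in>set (fst q). eval_atom B k p \<in> true_atoms B"
  have k': "\<forall>v. k v \<in> carrier B" using k by auto
  have wq: "\<forall>p\<in>set (fst q). wf_atom af ar p" "wf_atom af ar (snd q)"
    using X q by (auto simp: wf_qid_def)
  have "\<forall>p\<in>set (fst q). holds B k p" using p wq holds_iff_true_atoms[OF B _ k'] by blast
  hence "holds B k (snd q)" using m q k by (auto simp: sat_qid_def)
  thus "eval_atom B k (snd q) \<in> true_atoms B" using holds_iff_true_atoms[OF B wq(2) k'] by simp
qed

section \<open>Transport along an injection\<close>

definition image_struc :: "('a \<Rightarrow> 'b) \<Rightarrow> ('a,'f,'r) struc \<Rightarrow> ('b,'f,'r) struc" where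
  "image_struc g A = \<lparr> carrier = g ` carrier A,
     fnc = (\<lambda>f ys. g (fnc A f (map (inv_into (carrier A) g) ys))),
     rel = (\<lambda>r. map g ` rel A r) \<rparr>"

lemma image_struc_simps[simp]:
  "carrier (image_struc g A) = g ` carrier A"
  "fnc (image_struc g A) f ys = g (fnc A f (map (inv_into (carrier A) g) ys))"
  "rel (image_struc g A) r = map g ` rel A r"
  by (simp_all add: image_struc_def)

lemma is_struc_image:
  assumes A: "is_struc af ar A" and inj: "inj_on g (carrier A)"
  shows "is_struc af ar (image_struc g A)"
proof -
  have "carrier (image_struc g A) \<noteq> {}" using is_strucD(1)[OF A] by simp
  moreover have "fnc (image_struc g A) f ys \<in> carrier (image_struc g A)"
    if "set ys \<subseteq> carrier (image_struc g A)" "length ys = af f" for f ys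
  proof -
    have "set (map (inv_into (carrier A) g) ys) \<subseteq> carrier A"
      using that(1) by (auto intro: inv_into_into)
    hence "fnc A f (map (inv_into (carrier A) g) ys) \<in> carrier A"
      using is_strucD(2)[OF A] that(2) by simp
    thus ?thesis by simp
  qed
  moreover have "rel (image_struc g A) r \<subseteq> {xs. set xs \<subseteq> carrier (image_struc g A) \<and> length xs = ar r}" for r
  proof
    fix ys assume "ys \<in> rel (image_struc g A) r"
    then obtain xs where "xs \<in> rel A r" "ys = map g xs" by auto
    thus "ys \<in> {xs. set xs \<subseteq> carrier (image_struc g A) \<and> length xs = ar r}"
      using is_strucD(3)[OF A] by auto
  qed
  ultimately show ?thesis unfolding is_struc_def by blast
qed

lemma eval_image:
  assumes A: "is_struc af ar A" and inj: "inj_on g (carrier A)" and t: "wf_trm af t"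
    and k: "\<forall>v. k v \<in> carrier A"
  shows "eval (image_struc g A) (\<lambda>v. g (k v)) t = g (eval A k t)"
  using t
proof (induction t)
  case (Var v) thus ?case by simp
next
  case (Fn f ts)
  have "map (eval (image_struc g A) (\<lambda>v. g (k v))) ts = map g (map (eval A k) ts)"
    unfolding map_map by (rule map_cong[OF refl]) (use Fn in auto)
  moreover have "map (inv_into (carrier A) g) (map g (map (eval A k) ts)) = map (eval A k) ts"
    unfolding map_map
  proof (rule map_cong[OF refl])
    fix t assume "t \<in> set ts"
    hence "eval A k t \<in> carrier A" using Fn eval_in_carrier[OF A _ k] by auto
    thus "(inv_into (carrier A) g \<circ> (g \<circ> eval A k)) t = eval A k t"
      using inv_into_f_f[OF inj] by simp
  qed
  ultimately show ?case by (simp only: eval.simps image_struc_simps)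
qed

lemma holds_image:
  assumes A: "is_struc af ar A" and inj: "inj_on g (carrier A)" and a: "wf_atom af ar a"
    and k: "\<forall>v. k v \<in> carrier A"
  shows "holds (image_struc g A) (\<lambda>v. g (k v)) a \<longleftrightarrow> holds A k a"
proof (cases a)
  case (Eq s t)
  have s: "wf_trm af s" and t: "wf_trm af t" using a Eq by auto
  have "g (eval A k s) = g (eval A k t) \<longleftrightarrow> eval A k s = eval A k t"
    using inj_on_eq_iff[OF inj eval_in_carrier[OF A s k] eval_in_carrier[OF A t k]] .
  thus ?thesis using Eq eval_image[OF A inj s k] eval_image[OF A inj t k] by simp
next
  case (Rel r ts)
  have w: "\<forall>t\<in>set ts. wf_trm af t" using a Rel by auto
  have m: "map (eval (image_struc g A) (\<lambda>v. g (k v))) ts = map g (map (eval A k) ts)"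
    unfolding map_map by (rule map_cong[OF refl]) (use w eval_image[OF A inj _ k] in auto)
  have c: "set (map (eval A k) ts) \<subseteq> carrier A" using w eval_in_carrier[OF A _ k] by auto
  have "map g (map (eval A k) ts) \<in> map g ` rel A r \<longleftrightarrow> map (eval A k) ts \<in> rel A r"
  proof
    assume "map g (map (eval A k) ts) \<in> map g ` rel A r"
    then obtain xs where xs: "xs \<in> rel A r" "map g (map (eval A k) ts) = map g xs" by auto
    have "set xs \<subseteq> carrier A" using is_strucD(3)[OF A xs(1)] by blast
    hence "inj_on g (set (map (eval A k) ts) \<union> set xs)"
      using c inj by (meson Un_least inj_on_subset)
    hence "map (eval A k) ts = xs" using xs(2) inj_on_map_eq_map by blast
    thus "map (eval A k) ts \<in> rel A r" using xs(1) by simp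
  next
    assume "map (eval A k) ts \<in> rel A r"
    thus "map g (map (eval A k) ts) \<in> map g ` rel A r" by (rule imageI)
  qed
  thus ?thesis using Rel m by (simp only: holds.simps image_struc_simps)
qed

lemma sat_qid_image_iff:
  assumes A: "is_struc af ar A" and inj: "inj_on g (carrier A)" and q: "wf_qid af ar q"
  shows "sat_qid (image_struc g A) q \<longleftrightarrow> sat_qid A q"
proof -
  have wp: "\<forall>p\<in>set (fst q). wf_atom af ar p" and wc: "wf_atom af ar (snd q)"
    using q by (auto simp: wf_qid_def)
  show ?thesis
  proof
    assume s: "sat_qid (image_struc g A) q"
    show "sat_qid A q" unfolding sat_qid_def
    proof (intro allI impI)
      fix k assume k: "range k \<subseteq> carrier A" and p: "\<forall>p\<in>set (fst q). holds A k p"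
      have k': "\<forall>v. k v \<in> carrier A" using k by auto
      have "range (\<lambda>v. g (k v)) \<subseteq> carrier (image_struc g A)" using k' by auto
      moreover have "\<forall>p\<in>set (fst q). holds (image_struc g A) (\<lambda>v. g (k v)) p"
        using p wp holds_image[OF A inj _ k'] by blast
      ultimately have "holds (image_struc g A) (\<lambda>v. g (k v)) (snd q)"
        using s unfolding sat_qid_def by blast
      thus "holds A k (snd q)" using holds_image[OF A inj wc k'] by blast
    qed
  next
    assume s: "sat_qid A q"
    show "sat_qid (image_struc g A) q" unfolding sat_qid_def
    proof (intro allI impI)
      fix h assume h: "range h \<subseteq> carrier (image_struc g A)" and p: "\<forall>p\<in>set (fst q). holds (image_struc g A) h p"
      define k where "k v = inv_into (carrier A) g (h v)" for v
      have k': "\<forall>v. k v \<in> carrier A"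
      proof
        fix v have "h v \<in> g ` carrier A" using h by auto
        thus "k v \<in> carrier A" unfolding k_def by (rule inv_into_into)
      qed
      have hk: "h = (\<lambda>v. g (k v))"
      proof
        fix v have "h v \<in> g ` carrier A" using h by auto
        thus "h v = g (k v)" unfolding k_def by (rule f_inv_into_f[symmetric])
      qed
      have "\<forall>p\<in>set (fst q). holds A k p" using p wp holds_image[OF A inj _ k'] hk by blast
      moreover have "range k \<subseteq> carrier A" using k' by auto
      ultimately have "holds A k (snd q)" using s unfolding sat_qid_def by blast
      thus "holds (image_struc g A) h (snd q)" using holds_image[OF A inj wc k'] hk by blast
    qed
  qed
qed

lemma model_image_iff:
  assumes A: "is_struc af ar A" and inj: "inj_on g (carrier A)" and X: "\<forall>q\<in>X. wf_qid af ar q"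
  shows "model af ar X (image_struc g A) \<longleftrightarrow> model af ar X A"
  using sat_qid_image_iff[OF A inj] X is_struc_image[OF A inj] A unfolding model_def by blast

fun subst :: "('v \<Rightarrow> ('f,'w) trm) \<Rightarrow> ('f,'v) trm \<Rightarrow> ('f,'w) trm" where
  "subst \<sigma> (Var v) = \<sigma> v"
| "subst \<sigma> (Fn f ts) = Fn f (map (subst \<sigma>) ts)"

fun subst_atom :: "('v \<Rightarrow> ('f,'w) trm) \<Rightarrow> ('f,'r,'v) atom \<Rightarrow> ('f,'r,'w) atom" where
  "subst_atom \<sigma> (Eq s t) = Eq (subst \<sigma> s) (subst \<sigma> t)"
| "subst_atom \<sigma> (Rel r ts) = Rel r (map (subst \<sigma>) ts)"

lemma eval_subst: "eval A h (subst \<sigma> t) = eval A (\<lambda>v. eval A h (\<sigma> v)) t"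
proof (induction t)
  case (Fn f ts)
  have "map (eval A h) (map (subst \<sigma>) ts) = map (eval A (\<lambda>v. eval A h (\<sigma> v))) ts"
    unfolding map_map by (rule map_cong[OF refl]) (use Fn in auto)
  thus ?case by (simp only: eval.simps subst.simps)
qed simp

lemma holds_subst_atom: "holds A h (subst_atom \<sigma> a) \<longleftrightarrow> holds A (\<lambda>v. eval A h (\<sigma> v)) a"
proof (cases a)
  case (Rel r ts)
  have "map (eval A h) (map (subst \<sigma>) ts) = map (eval A (\<lambda>v. eval A h (\<sigma> v))) ts"
    unfolding map_map by (rule map_cong[OF refl]) (simp add: eval_subst)
  thus ?thesis using Rel by (simp only: holds.simps subst_atom.simps)
qed (simp add: eval_subst)

lemma wf_subst: "wf_trm af t \<Longrightarrow> (\<forall>v\<in>tvars t. wf_trm af (\<sigma> v)) \<Longrightarrow> wf_trm af (subst \<sigma> t)"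
  by (induction t) auto

lemma tvars_subst: "tvars (subst \<sigma> t) = (\<Union>v\<in>tvars t. tvars (\<sigma> v))"
  by (induction t) auto

lemma subst_id: "(\<forall>v\<in>tvars t. \<sigma> v = Var v) \<Longrightarrow> subst \<sigma> t = t"
proof (induction t)
  case (Fn f ts)
  have "map (subst \<sigma>) ts = ts" by (rule map_idI) (use Fn in auto)
  thus ?case by simp
qed simp

lemma wf_subst_atom: "wf_atom af ar a \<Longrightarrow> (\<forall>v\<in>avars a. wf_trm af (\<sigma> v)) \<Longrightarrow> wf_atom af ar (subst_atom \<sigma> a)"
  by (cases a) (auto intro: wf_subst)

lemma avars_subst_atom: "avars (subst_atom \<sigma> a) = (\<Union>v\<in>avars a. tvars (\<sigma> v))"
  by (cases a) (auto simp: tvars_subst)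

lemma subst_atom_id: "(\<forall>v\<in>avars a. \<sigma> v = Var v) \<Longrightarrow> subst_atom \<sigma> a = a"
proof (cases a)
  case (Rel r ts)
  moreover assume "\<forall>v\<in>avars a. \<sigma> v = Var v"
  ultimately have "map (subst \<sigma>) ts = ts" by (intro map_idI subst_id) auto
  thus ?thesis using Rel by simp
qed (auto simp: subst_id)

lemma finite_tvars: "finite (tvars t)"
  by (induction t) auto

lemma finite_avars: "finite (avars a)"
  by (cases a) (auto simp: finite_tvars)

lemma finite_qvars: "finite (qvars q)"
  by (auto simp: qvars_def finite_avars)

definition rename_qid :: "(nat \<Rightarrow> nat) \<Rightarrow> ('f,'r) qid \<Rightarrow> ('f,'r) qid" where
  "rename_qid \<rho> q = (map (subst_atom (Var \<circ> \<rho>)) (fst q), subst_atom (Var \<circ> \<rho>) (snd q))"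

lemma holds_rename: "holds A h (subst_atom (Var \<circ> \<rho>) a) \<longleftrightarrow> holds A (h \<circ> \<rho>) a"
  using holds_subst_atom[of A h "Var \<circ> \<rho>" a] by (simp add: comp_def)

lemma wf_qid_rename_qid: "wf_qid af ar q \<Longrightarrow> wf_qid af ar (rename_qid \<rho> q)"
  by (auto simp: wf_qid_def rename_qid_def intro!: wf_subst_atom)

lemma qvars_rename_qid: "qvars (rename_qid \<rho> q) = \<rho> ` qvars q"
  by (auto simp: qvars_def rename_qid_def avars_subst_atom)

lemma sat_qid_rename_qid:
  assumes inj: "inj_on \<rho> (qvars q)"
  shows "sat_qid A (rename_qid \<rho> q) \<longleftrightarrow> sat_qid A q"
proof
  assume s: "sat_qid A q"
  show "sat_qid A (rename_qid \<rho> q)" unfolding sat_qid_def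
  proof (intro allI impI)
    fix h assume "range h \<subseteq> carrier A" and p: "\<forall>p\<in>set (fst (rename_qid \<rho> q)). holds A h p"
    hence "range (h \<circ> \<rho>) \<subseteq> carrier A" "\<forall>p\<in>set (fst q). holds A (h \<circ> \<rho>) p"
      by (auto simp: rename_qid_def holds_rename)
    hence "holds A (h \<circ> \<rho>) (snd q)" using s unfolding sat_qid_def by blast
    thus "holds A h (snd (rename_qid \<rho> q))" by (simp add: rename_qid_def holds_rename)
  qed
next
  assume s: "sat_qid A (rename_qid \<rho> q)"
  show "sat_qid A q" unfolding sat_qid_def
  proof (intro allI impI)
    fix h assume h: "range h \<subseteq> carrier A" and p: "\<forall>p\<in>set (fst q). holds A h p"
    define h' where "h' = h \<circ> inv_into (qvars q) \<rho>"
    have agree: "holds A (h' \<circ> \<rho>) a \<longleftrightarrow> holds A h a" if "a \<in> set (fst q) \<or> a = snd q" for a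
    proof (intro holds_cong ballI)
      fix v assume "v \<in> avars a"
      hence "v \<in> qvars q" using that by (auto simp: qvars_def)
      thus "(h' \<circ> \<rho>) v = h v" using inj by (simp add: h'_def)
    qed
    have "range h' \<subseteq> carrier A" using h by (auto simp: h'_def)
    moreover have "\<forall>p\<in>set (fst (rename_qid \<rho> q)). holds A h' p"
      using p agree by (auto simp: rename_qid_def holds_rename)
    ultimately have "holds A h' (snd (rename_qid \<rho> q))" using s unfolding sat_qid_def by blast
    thus "holds A h (snd q)" using agree by (simp add: rename_qid_def holds_rename)
  qed
qed

lemma Cn_rename_qid:
  "wf_qid af ar q \<Longrightarrow> inj_on \<rho> (qvars q) \<Longrightarrow> rename_qid \<rho> q \<in> Cn af ar X \<longleftrightarrow> q \<in> Cn af ar X"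
  by (simp add: Cn_def wf_qid_rename_qid sat_qid_rename_qid)

section \<open>Consequence and the free structure\<close>

lemma Cn_wf: "q \<in> Cn af ar X \<Longrightarrow> wf_qid af ar q"
  by (simp add: Cn_def)

lemma Cn_ext: "\<forall>q\<in>X. wf_qid af ar q \<Longrightarrow> X \<subseteq> Cn af ar X"
  by (auto simp: Cn_def model_def)

lemma Cn_mono: "X \<subseteq> Y \<Longrightarrow> Cn af ar X \<subseteq> Cn af ar Y"
  by (auto simp: Cn_def model_def)

lemma model_Cn: "model af ar X (A :: (('f,nat) trm set,'f,'r) struc) \<Longrightarrow> model af ar (Cn af ar X) A"
  by (auto simp: Cn_def model_def)

lemma Cn_idem:
  fixes X :: "('f,'r) qid set"
  shows "Cn af ar (Cn af ar X) = Cn af ar X"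
proof
  show "Cn af ar (Cn af ar X) \<subseteq> Cn af ar X"
  proof
    fix q assume q: "q \<in> Cn af ar (Cn af ar X)"
    have "sat_qid A q" if "model af ar X A" for A :: "(('f,nat) trm set,'f,'r) struc"
      using q model_Cn[OF that] by (simp add: Cn_def)
    thus "q \<in> Cn af ar X" using Cn_wf[OF q] by (simp add: Cn_def)
  qed
  show "Cn af ar X \<subseteq> Cn af ar (Cn af ar X)" using Cn_wf by (intro Cn_ext) blast
qed

locale free_structure =
  fixes af :: "'f \<Rightarrow> nat" and ar :: "'r \<Rightarrow> nat" and Sig :: "('f,'r) qid set" and n :: nat
  assumes wfSig: "\<forall>q\<in>Sig. wf_qid af ar q" and npos: "n \<ge> 1"
begin

abbreviation "F \<equiv> Free af ar Sig n"
abbreviation "fc \<equiv> fcls af ar Sig n"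
abbreviation "Tms \<equiv> Tn af n"

definition K_valid :: "('f,'r,nat) atom \<Rightarrow> bool" where
  "K_valid a \<longleftrightarrow> ([], a) \<in> Cn af ar Sig"

lemma K_valid_iff: "K_valid a \<longleftrightarrow> wf_atom af ar a \<and>
   (\<forall>A :: (('f,nat) trm set,'f,'r) struc. model af ar Sig A \<longrightarrow>
      (\<forall>h. range h \<subseteq> carrier A \<longrightarrow> holds A h a))"
  by (simp add: K_valid_def Cn_def wf_qid_def sat_qid_def)

lemma K_validD:
  "K_valid a \<Longrightarrow> model af ar Sig (A :: (('f,nat) trm set,'f,'r) struc) \<Longrightarrow> range h \<subseteq> carrier A \<Longrightarrow>
    holds A h a"
  using K_valid_iff by blast

lemma modelD: "model af ar X A \<Longrightarrow> is_struc af ar A"  "model af ar X A \<Longrightarrow> q \<in> X \<Longrightarrow> sat_qid A q"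
  by (auto simp: model_def)

lemma Tms_iff: "t \<in> Tms \<longleftrightarrow> wf_trm af t \<and> tvars t \<subseteq> {..<n}"
  by (simp add: Tn_def)

lemma set_subset_Tms: "set ts \<subseteq> Tms \<longleftrightarrow> (\<forall>t\<in>set ts. wf_trm af t) \<and> (\<forall>t\<in>set ts. tvars t \<subseteq> {..<n})"
  unfolding subset_iff Tms_iff by auto

lemma Fn_in_Tms: "Fn f ts \<in> Tms \<longleftrightarrow> length ts = af f \<and> set ts \<subseteq> Tms"
  unfolding set_subset_Tms by (simp add: Tms_iff UN_subset_iff)

lemma fc_iff: "s \<in> fc t \<longleftrightarrow> s \<in> Tms \<and> K_valid (Eq s t)"
  by (simp add: fcls_def K_valid_def)

lemma fc_sub: "fc t \<subseteq> Tms" by (auto simp: fc_iff)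

lemma fc_sem:
  assumes "s \<in> fc t" "model af ar Sig (A :: (('f,nat) trm set,'f,'r) struc)" "range h \<subseteq> carrier A"
  shows "eval A h s = eval A h t"
  using K_validD[of "Eq s t" A h] assms fc_iff by auto

lemma fc_self: "t \<in> Tms \<Longrightarrow> t \<in> fc t"
  by (auto simp: fc_iff K_valid_iff Tms_iff)

lemma fc_eq:
  assumes "s \<in> fc t" "t \<in> Tms"
  shows "fc s = fc t"
proof -
  have sT: "s \<in> Tms" using assms fc_iff by blast
  have e: "eval A h s = eval A h t" if "model af ar Sig A" "range h \<subseteq> carrier A" for A :: "(('f,nat) trm set,'f,'r) struc" and h
    using fc_sem[OF assms(1) that] .
  show ?thesis
  proof (intro set_eqI iffI)
    fix u assume "u \<in> fc s"
    hence "u \<in> Tms" "K_valid (Eq u s)" by (auto simp: fc_iff)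
    thus "u \<in> fc t" using e assms(2) by (auto simp: fc_iff K_valid_iff Tms_iff)
  next
    fix u assume "u \<in> fc t"
    hence "u \<in> Tms" "K_valid (Eq u t)" by (auto simp: fc_iff)
    thus "u \<in> fc s" using e sT by (auto simp: fc_iff K_valid_iff Tms_iff)
  qed
qed

lemma fc_eq_iff:
  assumes "s \<in> Tms" "t \<in> Tms"
  shows "fc s = fc t \<longleftrightarrow> s \<in> fc t"
  using fc_eq[OF _ assms(2)] fc_self[OF assms(1)] by blast

lemma carrier_F: "carrier F = fc ` Tms" by (simp add: Free_def)

lemma some_in_carrier_F:
  assumes "X \<in> carrier F"
  shows "(SOME u. u \<in> X) \<in> Tms" "fc (SOME u. u \<in> X) = X"
proof -
  obtain t where t: "t \<in> Tms" "X = fc t" using assms carrier_F by auto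
  hence "t \<in> X" using fc_self by simp
  hence u: "(SOME u. u \<in> X) \<in> X" by (rule someI)
  thus "(SOME u. u \<in> X) \<in> Tms" using t fc_sub by blast
  show "fc (SOME u. u \<in> X) = X" using fc_eq u t by simp
qed

lemma is_struc_F: "is_struc af ar F"
proof -
  have "Var 0 \<in> Tms" using npos by (simp add: Tms_iff)
  hence "carrier F \<noteq> {}" using carrier_F by auto
  moreover have "fnc F f Xs \<in> carrier F" if "set Xs \<subseteq> carrier F" "length Xs = af f" for f Xs
  proof -
    have "set (map (\<lambda>X. SOME u. u \<in> X) Xs) \<subseteq> Tms" using that(1) some_in_carrier_F(1) by auto
    hence "Fn f (map (\<lambda>X. SOME u. u \<in> X) Xs) \<in> Tms" using that(2) Fn_in_Tms by simp
    thus ?thesis by (simp add: Free_def)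
  qed
  moreover have "rel F r \<subseteq> {xs. set xs \<subseteq> carrier F \<and> length xs = ar r}" for r
    by (fastforce simp: Free_def)
  ultimately show ?thesis unfolding is_struc_def by blast
qed

lemma fnc_F: "fnc F f Xs = fc (Fn f (map (\<lambda>X. SOME u. u \<in> X) Xs))"
  by (simp add: Free_def)

lemma rel_F: "rel F r = {map fc ts | ts. set ts \<subseteq> Tms \<and> length ts = ar r \<and> K_valid (Rel r ts)}"
  by (simp add: Free_def K_valid_def)

lemma subst_in_Tms: "wf_trm af t \<Longrightarrow> (\<forall>v. \<sigma> v \<in> Tms) \<Longrightarrow> subst \<sigma> t \<in> Tms"
  unfolding Tms_iff using wf_subst[of af t \<sigma>] tvars_subst[of \<sigma> t] by blast

lemma map_fc_eval_eq:
  fixes A :: "(('f,nat) trm set,'f,'r) struc"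
  assumes "set us \<subseteq> Tms" "set ts \<subseteq> Tms" "map fc us = map fc ts"
    and m: "model af ar Sig A" and h: "range h \<subseteq> carrier A"
  shows "map (eval A h) us = map (eval A h) ts"
  using assms(1-3)
proof (induction us arbitrary: ts)
  case (Cons u us)
  then obtain t ts' where "ts = t # ts'" by (cases ts) auto
  with Cons show ?case using fc_eq_iff fc_sem[OF _ m h] by auto
qed simp

lemma fc_Fn:
  assumes "length ts = af f" "set us \<subseteq> Tms" "set ts \<subseteq> Tms" "map fc us = map fc ts"
  shows "fc (Fn f us) = fc (Fn f ts)"
proof -
  have T: "Fn f us \<in> Tms" "Fn f ts \<in> Tms"
    using assms map_eq_imp_length_eq[OF assms(4)] by (simp_all add: Fn_in_Tms)
  have "K_valid (Eq (Fn f us) (Fn f ts))"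
    using T map_fc_eval_eq[OF assms(2-4)] by (auto simp: K_valid_iff Tms_iff)
  thus ?thesis using fc_eq T fc_iff by blast
qed

lemma eval_F:
  assumes \<sigma>: "\<forall>v. \<sigma> v \<in> Tms" and "wf_trm af t"
  shows "eval F (\<lambda>v. fc (\<sigma> v)) t = fc (subst \<sigma> t)"
  using assms(2)
proof (induction t)
  case (Fn f ts)
  define us where "us = map (\<lambda>X. SOME u. u \<in> X) (map (\<lambda>t. fc (subst \<sigma> t)) ts)"
  have ts: "set (map (subst \<sigma>) ts) \<subseteq> Tms" using Fn subst_in_Tms[OF _ \<sigma>] by auto
  hence "set us \<subseteq> Tms" "map fc us = map fc (map (subst \<sigma>) ts)"
    using some_in_carrier_F carrier_F by (auto simp: us_def)
  hence "fc (Fn f us) = fc (Fn f (map (subst \<sigma>) ts))" using fc_Fn ts Fn by simp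
  moreover have "map (eval F (\<lambda>v. fc (\<sigma> v))) ts = map (\<lambda>t. fc (subst \<sigma> t)) ts"
    using Fn by auto
  hence "eval F (\<lambda>v. fc (\<sigma> v)) (Fn f ts) = fc (Fn f us)"
    by (simp only: eval.simps fnc_F us_def)
  ultimately show ?case by simp
qed simp

lemma rel_F_iff:
  assumes ts: "set ts \<subseteq> Tms"
  shows "map fc ts \<in> rel F r \<longleftrightarrow> K_valid (Rel r ts)"
proof
  assume "map fc ts \<in> rel F r"
  then obtain us where us: "map fc us = map fc ts" "set us \<subseteq> Tms" "K_valid (Rel r us)"
    by (auto simp: rel_F)
  have "length ts = length us" using map_eq_imp_length_eq[OF us(1)] by simp
  thus "K_valid (Rel r ts)"
    using us ts map_fc_eval_eq[OF us(2) ts us(1)] by (auto simp: K_valid_iff Tms_iff)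
next
  assume "K_valid (Rel r ts)"
  thus "map fc ts \<in> rel F r" using ts by (auto simp: rel_F K_valid_iff)
qed

lemma holds_F_iff:
  assumes \<sigma>: "\<forall>v. \<sigma> v \<in> Tms" and a: "wf_atom af ar a"
  shows "holds F (\<lambda>v. fc (\<sigma> v)) a \<longleftrightarrow> K_valid (subst_atom \<sigma> a)"
proof (cases a)
  case (Eq s t)
  hence "subst \<sigma> s \<in> Tms" "subst \<sigma> t \<in> Tms" using a subst_in_Tms[OF _ \<sigma>] by auto
  thus ?thesis using Eq a eval_F[OF \<sigma>] fc_eq_iff fc_iff by simp
next
  case (Rel r ts)
  hence "map (eval F (\<lambda>v. fc (\<sigma> v))) ts = map fc (map (subst \<sigma>) ts)"
    and "set (map (subst \<sigma>) ts) \<subseteq> Tms" using a eval_F[OF \<sigma>] subst_in_Tms[OF _ \<sigma>] by auto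
  thus ?thesis using Rel rel_F_iff by (simp del: map_map)
qed

lemma K_valid_subst_Sig:
  assumes q: "q \<in> Sig" and \<sigma>: "\<forall>v. \<sigma> v \<in> Tms"
    and p: "\<forall>p\<in>set (fst q). K_valid (subst_atom \<sigma> p)"
  shows "K_valid (subst_atom \<sigma> (snd q))"
  unfolding K_valid_iff
proof (intro conjI allI impI)
  show "wf_atom af ar (subst_atom \<sigma> (snd q))"
    using wfSig q \<sigma> by (intro wf_subst_atom) (auto simp: wf_qid_def Tms_iff)
next
  fix A :: "(('f,nat) trm set,'f,'r) struc" and k :: "nat \<Rightarrow> _"
  assume m: "model af ar Sig A" and k: "range k \<subseteq> carrier A"
  have "range (\<lambda>v. eval A k (\<sigma> v)) \<subseteq> carrier A"
    using k \<sigma> by (auto simp: Tms_iff intro!: eval_in_carrier[OF modelD(1)[OF m]])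
  moreover have "\<forall>p\<in>set (fst q). holds A (\<lambda>v. eval A k (\<sigma> v)) p"
    using p K_validD[OF _ m k] holds_subst_atom by blast
  ultimately have "holds A (\<lambda>v. eval A k (\<sigma> v)) (snd q)"
    using modelD(2)[OF m q] unfolding sat_qid_def by blast
  thus "holds A k (subst_atom \<sigma> (snd q))" using holds_subst_atom by blast
qed

lemma model_F: "model af ar Sig F"
  unfolding model_def
proof (intro conjI ballI)
  show "is_struc af ar F" by (rule is_struc_F)
next
  fix q assume q: "q \<in> Sig"
  have wq: "\<forall>p\<in>set (fst q). wf_atom af ar p" "wf_atom af ar (snd q)"
    using wfSig q by (auto simp: wf_qid_def)
  show "sat_qid F q" unfolding sat_qid_def
  proof (intro allI impI)
    fix h assume h: "range h \<subseteq> carrier F" and p: "\<forall>p\<in>set (fst q). holds F h p"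
    define \<sigma> where "\<sigma> v = (SOME u. u \<in> h v)" for v
    have hv: "h v \<in> carrier F" for v using h by auto
    have \<sigma>: "\<forall>v. \<sigma> v \<in> Tms" and h\<sigma>: "h = (\<lambda>v. fc (\<sigma> v))"
      using some_in_carrier_F[OF hv] by (auto simp: \<sigma>_def)
    have "K_valid (subst_atom \<sigma> (snd q))"
      using K_valid_subst_Sig[OF q \<sigma>] p holds_F_iff[OF \<sigma>] wq h\<sigma> by auto
    thus "holds F h (snd q)" using holds_F_iff[OF \<sigma> wq(2)] h\<sigma> by simp
  qed
qed

definition free_ext :: "(('f,nat) trm set,'f,'r) struc \<Rightarrow> (nat \<Rightarrow> ('f,nat) trm set) \<Rightarrow> ('f,nat) trm set \<Rightarrow> ('f,nat) trm set" where
  "free_ext A h X = eval A h (SOME u. u \<in> X)"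

lemma free_ext_fc:
  assumes m: "model af ar Sig A" and h: "range h \<subseteq> carrier A" and t: "t \<in> Tms"
  shows "free_ext A h (fc t) = eval A h t"
proof -
  have "t \<in> fc t" using fc_self[OF t] .
  hence "(SOME u. u \<in> fc t) \<in> fc t" by (rule someI)
  thus ?thesis unfolding free_ext_def using fc_sem[OF _ m h] by blast
qed

lemma is_hom_free_ext:
  assumes m: "model af ar Sig A" and h: "range h \<subseteq> carrier A"
  shows "is_hom af F A (free_ext A h)"
proof -
  have A: "is_struc af ar A" using modelD(1)[OF m] .
  have h': "\<forall>v. h v \<in> carrier A" using h by auto
  have "\<forall>x\<in>carrier F. free_ext A h x \<in> carrier A"
  proof
    fix x assume "x \<in> carrier F"
    hence "(SOME u. u \<in> x) \<in> Tms" by (rule some_in_carrier_F(1))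
    thus "free_ext A h x \<in> carrier A" unfolding free_ext_def
      using eval_in_carrier[OF A _ h'] by (simp add: Tms_iff)
  qed
  moreover have "free_ext A h (fnc F f xs) = fnc A f (map (free_ext A h) xs)"
    if "set xs \<subseteq> carrier F" "length xs = af f" for f xs
  proof -
    have "set (map (\<lambda>X. SOME u. u \<in> X) xs) \<subseteq> Tms" using that(1) some_in_carrier_F(1) by auto
    hence T: "Fn f (map (\<lambda>X. SOME u. u \<in> X) xs) \<in> Tms" using that(2) Fn_in_Tms by simp
    have "free_ext A h (fnc F f xs) = free_ext A h (fc (Fn f (map (\<lambda>X. SOME u. u \<in> X) xs)))"
      by (simp add: fnc_F)
    also have "\<dots> = eval A h (Fn f (map (\<lambda>X. SOME u. u \<in> X) xs))" using free_ext_fc[OF m h T] .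
    also have "\<dots> = fnc A f (map (free_ext A h) xs)" by (simp add: free_ext_def[abs_def] o_def)
    finally show ?thesis .
  qed
  moreover have "map (free_ext A h) xs \<in> rel A r" if xr: "xs \<in> rel F r" for r xs
  proof -
    obtain ts where ts: "xs = map fc ts" "set ts \<subseteq> Tms" "K_valid (Rel r ts)"
      using xr by (auto simp: rel_F)
    have "map (free_ext A h) xs = map (eval A h) ts"
      unfolding ts(1) map_map by (rule map_cong[OF refl]) (use ts(2) free_ext_fc[OF m h] in auto)
    moreover have "holds A h (Rel r ts)" using K_validD[OF ts(3) m h] .
    ultimately show ?thesis by simp
  qed
  ultimately show ?thesis unfolding is_hom_def by blast
qed

fun fatom_of :: "('f,'r,nat) atom \<Rightarrow> (('f,nat) trm set,'r) fatom" where
  "fatom_of (Eq s t) = FEq (fc s) (fc t)"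
| "fatom_of (Rel r ts) = FRel r (map fc ts)"

definition n_atom :: "('f,'r,nat) atom \<Rightarrow> bool" where
  "n_atom a \<longleftrightarrow> wf_atom af ar a \<and> avars a \<subseteq> {..<n}"

lemma n_atom_wf: "n_atom a \<Longrightarrow> wf_atom af ar a" by (simp add: n_atom_def)

lemma n_atom_Rel: "n_atom (Rel r ts) \<longleftrightarrow> length ts = ar r \<and> set ts \<subseteq> Tms"
  unfolding set_subset_Tms by (simp add: n_atom_def UN_subset_iff)

lemma n_atom_Eq: "n_atom (Eq s t) \<longleftrightarrow> s \<in> Tms \<and> t \<in> Tms"
  by (auto simp: n_atom_def Tms_iff)

lemma fatom_of_in_fatoms: "n_atom a \<Longrightarrow> fatom_of a \<in> fatoms ar F"
  by (cases a) (auto simp: n_atom_Rel n_atom_Eq carrier_F)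

lemma fatoms_F_fatom_of:
  assumes "al \<in> fatoms ar F"
  shows "\<exists>a. n_atom a \<and> al = fatom_of a"
proof (cases al)
  case (FEq X Y)
  hence "X \<in> carrier F" "Y \<in> carrier F" using assms by auto
  then obtain s t where "s \<in> Tms" "t \<in> Tms" "X = fc s" "Y = fc t" using carrier_F by auto
  thus ?thesis using FEq n_atom_Eq by (metis fatom_of.simps(1))
next
  case (FRel r xs)
  hence xs: "set xs \<subseteq> carrier F" "length xs = ar r" using assms by auto
  define ts where "ts = map (\<lambda>X. SOME u. u \<in> X) xs"
  have "set ts \<subseteq> Tms" using xs some_in_carrier_F(1) by (auto simp: ts_def)
  moreover have "map fc ts = xs" unfolding ts_def map_map
    by (rule map_idI) (use xs some_in_carrier_F(2) in auto)
  moreover have "length ts = ar r" using xs by (simp add: ts_def)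
  ultimately show ?thesis using FRel n_atom_Rel by (metis fatom_of.simps(2))
qed

lemma free_ext_fatom_of:
  assumes m: "model af ar Sig A" and h: "range h \<subseteq> carrier A" and a: "n_atom a"
  shows "fatom_map (free_ext A h) (fatom_of a) = eval_atom A h a"
proof (cases a)
  case (Eq s t) thus ?thesis using a free_ext_fc[OF m h] n_atom_Eq by simp
next
  case (Rel r ts)
  have "map (free_ext A h) (map fc ts) = map (eval A h) ts"
    unfolding map_map by (rule map_cong[OF refl]) (use a Rel n_atom_Rel free_ext_fc[OF m h] in auto)
  thus ?thesis using Rel by simp
qed

text \<open>Variables \<open>\<ge> n\<close> are sent to an arbitrary generator; only the values below \<open>n\<close> matter.\<close>
definition gen_assign :: "nat \<Rightarrow> ('f,nat) trm set" where
  "gen_assign v = fc (Var (if v < n then v else 0))"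

lemma gen_assign_carrier: "range gen_assign \<subseteq> carrier F"
  using npos by (auto simp: gen_assign_def carrier_F Tms_iff)

lemma eval_atom_gen_assign:
  assumes a: "n_atom a"
  shows "eval_atom F gen_assign a = fatom_of a"
proof -
  define \<sigma> :: "nat \<Rightarrow> ('f,nat) trm" where "\<sigma> v = Var (if v < n then v else 0)" for v
  have s: "\<forall>v. \<sigma> v \<in> Tms" using npos by (auto simp: \<sigma>_def Tms_iff)
  have c: "gen_assign = (\<lambda>v. fc (\<sigma> v))" by (auto simp: gen_assign_def \<sigma>_def)
  have id: "subst_atom \<sigma> a = a" using a by (intro subst_atom_id) (auto simp: n_atom_def \<sigma>_def)
  have w: "wf_atom af ar a" using a by (simp add: n_atom_def)
  show ?thesis
  proof (cases a)
    case (Eq s' t') thus ?thesis using eval_F[OF s] c w id by simp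
  next
    case (Rel r ts)
    have "map (eval F (\<lambda>v. fc (\<sigma> v))) ts = map fc (map (subst \<sigma>) ts)"
      unfolding map_map by (rule map_cong[OF refl]) (use w Rel eval_F[OF s] in auto)
    moreover have "map (subst \<sigma>) ts = ts" using id Rel by simp
    ultimately show ?thesis unfolding Rel eval_atom.simps fatom_of.simps c by (simp only:)
  qed
qed

section \<open>Generated \<open>K\<close>-congruences of the free structure\<close>

abbreviation "FA \<equiv> fatoms ar F"
abbreviation "ConF \<equiv> ConK af ar Sig F"
abbreviation "TF \<equiv> TnK af ar Sig n"

definition K_cong_set :: "('f,'r) qid set \<Rightarrow> (('f,nat) trm set,'r) fatom set \<Rightarrow> bool" where
  "K_cong_set X D \<longleftrightarrow> is_cong_set af ar F D \<and> closed_under X F D"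

definition Cg :: "('f,'r) qid set \<Rightarrow> (('f,nat) trm set,'r) fatom set \<Rightarrow> (('f,nat) trm set,'r) fatom set" where
  "Cg X G = \<Inter>{D. K_cong_set X D \<and> G \<subseteq> D}"

lemma K_cong_set_fatoms: "K_cong_set X D \<Longrightarrow> D \<subseteq> FA"
  unfolding K_cong_set_def using is_cong_setD(1) by blast

lemma K_cong_set_top: "\<forall>q\<in>X. wf_qid af ar q \<Longrightarrow> K_cong_set X FA"
  unfolding K_cong_set_def using fatoms_cong_set[OF is_struc_F] by blast

lemma K_cong_set_Cg:
  assumes X: "\<forall>q\<in>X. wf_qid af ar q" and G: "G \<subseteq> FA"
  shows "K_cong_set X (Cg X G)"
proof -
  have "{D. K_cong_set X D \<and> G \<subseteq> D} \<noteq> {}" using K_cong_set_top[OF X] G by blast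
  thus ?thesis unfolding Cg_def K_cong_set_def by (rule Inter_cong_set) blast
qed

lemma Cg_ext: "G \<subseteq> Cg X G"
  unfolding Cg_def by blast

lemma Cg_least: "K_cong_set X D \<Longrightarrow> G \<subseteq> D \<Longrightarrow> Cg X G \<subseteq> D"
  unfolding Cg_def by blast

lemma Cg_fatoms: "\<forall>q\<in>X. wf_qid af ar q \<Longrightarrow> G \<subseteq> FA \<Longrightarrow> Cg X G \<subseteq> FA"
  using K_cong_set_fatoms K_cong_set_Cg by blast

lemma Cg_mono:
  assumes "\<forall>q\<in>X. wf_qid af ar q" "G \<subseteq> H" "H \<subseteq> FA"
  shows "Cg X G \<subseteq> Cg X H"
  using Cg_least[OF K_cong_set_Cg[OF assms(1,3)]] Cg_ext[of H X] assms(2) by blast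

lemma Cg_K_cong_set: "K_cong_set X D \<Longrightarrow> Cg X D = D"
  unfolding Cg_def by blast

lemma Cg_eqI:
  assumes X: "\<forall>q\<in>X. wf_qid af ar q" and "G \<subseteq> H" "H \<subseteq> Cg X G" "G \<subseteq> FA"
  shows "Cg X H = Cg X G"
proof
  show "Cg X H \<subseteq> Cg X G" using Cg_least[OF K_cong_set_Cg[OF X assms(4)] assms(3)] .
  show "Cg X G \<subseteq> Cg X H" using Cg_mono[OF X assms(2)] assms(3) Cg_fatoms[OF X assms(4)] by blast
qed

lemma Cg_Un: "\<forall>q\<in>X. wf_qid af ar q \<Longrightarrow> G \<subseteq> FA \<Longrightarrow> H \<subseteq> FA \<Longrightarrow>
    Cg X (Cg X G \<union> Cg X H) = Cg X (G \<union> H)"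
proof -
  assume X: "\<forall>q\<in>X. wf_qid af ar q" and G: "G \<subseteq> FA" and H: "H \<subseteq> FA"
  have GH: "G \<union> H \<subseteq> FA" using G H by blast
  have "Cg X G \<subseteq> Cg X (G \<union> H)" "Cg X H \<subseteq> Cg X (G \<union> H)"
    using Cg_mono[OF X _ GH] by auto
  moreover have "G \<union> H \<subseteq> Cg X G \<union> Cg X H" using Cg_ext[of G X] Cg_ext[of H X] by blast
  ultimately show ?thesis using Cg_eqI[OF X, of "G \<union> H" "Cg X G \<union> Cg X H"] GH by blast
qed

lemma ConK_F_iff: "\<forall>q\<in>X. wf_qid af ar q \<Longrightarrow> th \<in> ConK af ar X F \<longleftrightarrow> K_cong_set X (atoms th)"
  unfolding K_cong_set_def using ConK_iff[OF is_struc_F] by blast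

lemma K_cong_set_antimono: "X \<subseteq> Y \<Longrightarrow> K_cong_set Y D \<Longrightarrow> K_cong_set X D"
  unfolding K_cong_set_def using closed_under_mono by blast

lemma Cg_Cg:
  assumes X: "\<forall>q\<in>X. wf_qid af ar q" and Y: "\<forall>q\<in>Y. wf_qid af ar q" and XY: "X \<subseteq> Y" and G: "G \<subseteq> FA"
  shows "Cg Y (Cg X G) = Cg Y G"
proof (rule Cg_eqI[OF Y])
  show "G \<subseteq> Cg X G" using Cg_ext[of G X] .
  show "Cg X G \<subseteq> Cg Y G"
    using Cg_least[OF K_cong_set_antimono[OF XY K_cong_set_Cg[OF Y G]] Cg_ext[of G Y]] .
qed (rule G)

lemma ConF_iff: "th \<in> ConF \<longleftrightarrow> K_cong_set Sig (atoms th)"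
  using ConK_F_iff[OF wfSig] .

lemma cong_of_Cg_ConF: "G \<subseteq> FA \<Longrightarrow> cong_of (Cg Sig G) \<in> ConF"
  using ConF_iff K_cong_set_Cg[OF wfSig] by simp

lemma is_lub_unique: "is_lub L S u \<Longrightarrow> is_lub L S v \<Longrightarrow> u = v"
  unfolding is_lub_def cle_iff_atoms by (metis atoms_inject subset_antisym)

lemma lub_ConF:
  assumes S: "S \<subseteq> ConF"
  shows "lub ConF S = cong_of (Cg Sig (\<Union>(atoms ` S)))"
proof -
  have U: "\<Union>(atoms ` S) \<subseteq> FA" using S ConF_iff K_cong_set_fatoms by blast
  have "is_lub ConF S (cong_of (Cg Sig (\<Union>(atoms ` S))))"
    unfolding is_lub_def cle_iff_atoms
  proof (intro conjI ballI impI)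
    show "cong_of (Cg Sig (\<Union>(atoms ` S))) \<in> ConF" using cong_of_Cg_ConF[OF U] .
  next
    fix x assume "x \<in> S" thus "atoms x \<subseteq> atoms (cong_of (Cg Sig (\<Union>(atoms ` S))))"
      using Cg_ext[of "\<Union>(atoms ` S)" Sig] by auto
  next
    fix v assume v: "v \<in> ConF" "\<forall>x\<in>S. atoms x \<subseteq> atoms v"
    show "atoms (cong_of (Cg Sig (\<Union>(atoms ` S)))) \<subseteq> atoms v"
      using Cg_least[of Sig "atoms v" "\<Union>(atoms ` S)"] v ConF_iff by auto
  qed
  thus ?thesis unfolding lub_def using is_lub_unique by blast
qed

lemma atoms_lub_ConF: "S \<subseteq> ConF \<Longrightarrow> atoms (lub ConF S) = Cg Sig (\<Union>(atoms ` S))"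
  using lub_ConF by simp

lemma pcon_ConF:
  assumes al: "al \<in> FA"
  shows "pcon ConF al = cong_of (Cg Sig {al})"
proof -
  have al': "{al} \<subseteq> FA" using al by blast
  have P: "cong_of (Cg Sig {al}) \<in> ConF \<and> fatom_in (cong_of (Cg Sig {al})) al \<and>
      (\<forall>ps\<in>ConF. fatom_in ps al \<longrightarrow> cle (cong_of (Cg Sig {al})) ps)"
  proof (intro conjI ballI impI)
    show "cong_of (Cg Sig {al}) \<in> ConF" using cong_of_Cg_ConF[OF al'] .
    have "al \<in> atoms (cong_of (Cg Sig {al}))" using Cg_ext[of "{al}" Sig] by simp
    thus "fatom_in (cong_of (Cg Sig {al})) al" by (simp add: atoms_def)
  next
    fix ps assume "ps \<in> ConF" "fatom_in ps al"
    hence "K_cong_set Sig (atoms ps)" "{al} \<subseteq> atoms ps" using ConF_iff by (auto simp: atoms_def)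
    thus "cle (cong_of (Cg Sig {al})) ps" unfolding cle_iff_atoms using Cg_least by simp
  qed
  show ?thesis unfolding pcon_def
  proof (rule the_equality)
    show "cong_of (Cg Sig {al}) \<in> ConF \<and> fatom_in (cong_of (Cg Sig {al})) al \<and>
      (\<forall>ps\<in>ConF. fatom_in ps al \<longrightarrow> cle (cong_of (Cg Sig {al})) ps)" by (rule P)
  next
    fix th assume th: "th \<in> ConF \<and> fatom_in th al \<and> (\<forall>ps\<in>ConF. fatom_in ps al \<longrightarrow> cle th ps)"
    have "cle th (cong_of (Cg Sig {al}))" using th P by blast
    moreover have "cle (cong_of (Cg Sig {al})) th" using th P by blast
    ultimately show "th = cong_of (Cg Sig {al})"
      unfolding cle_iff_atoms by (metis atoms_inject subset_antisym)
  qed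
qed

lemma Cg_Union_singletons:
  assumes A: "A \<subseteq> FA"
  shows "Cg Sig (\<Union>al\<in>A. Cg Sig {al}) = Cg Sig A"
proof (rule Cg_eqI[OF wfSig _ _ A])
  show "A \<subseteq> (\<Union>al\<in>A. Cg Sig {al})" using A Cg_ext[of "{_}" Sig] by blast
  show "(\<Union>al\<in>A. Cg Sig {al}) \<subseteq> Cg Sig A" using A Cg_mono[OF wfSig, of "{_}" A] by blast
qed

lemma lub_pcon_ConF:
  assumes A: "A \<subseteq> FA"
  shows "lub ConF (pcon ConF ` A) = cong_of (Cg Sig A)"
proof -
  have pc: "pcon ConF ` A = (\<lambda>al. cong_of (Cg Sig {al})) ` A"
    by (rule image_cong[OF refl]) (use pcon_ConF A in blast)
  have "pcon ConF ` A \<subseteq> ConF" unfolding pc using A cong_of_Cg_ConF by blast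
  moreover have "\<Union>(atoms ` pcon ConF ` A) = (\<Union>al\<in>A. Cg Sig {al})" unfolding pc by auto
  ultimately show ?thesis using lub_ConF Cg_Union_singletons[OF A] by simp
qed

text \<open>The congruences generated by finite parts of \<open>U\<close> form an updirected family whose union is
  closed, hence contains \<open>Cg Sig U\<close>.\<close>
lemma Cg_finitary:
  assumes U: "U \<subseteq> FA" and G: "finite G" "G \<subseteq> Cg Sig U"
  shows "\<exists>U'\<subseteq>U. finite U' \<and> G \<subseteq> Cg Sig U'"
proof -
  define \<D> where "\<D> = Cg Sig ` {U'. U' \<subseteq> U \<and> finite U'}"
  have dir: "updirected \<D>" unfolding updirected_def
  proof (intro conjI ballI)
    show "\<D> \<noteq> {}" by (auto simp: \<D>_def)
    fix D1 D2 assume "D1 \<in> \<D>" "D2 \<in> \<D>"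
    then obtain U1 U2 where U12: "D1 = Cg Sig U1" "D2 = Cg Sig U2" "U1 \<union> U2 \<subseteq> U" "finite (U1 \<union> U2)"
      by (auto simp: \<D>_def)
    hence "Cg Sig U1 \<subseteq> Cg Sig (U1 \<union> U2)" "Cg Sig U2 \<subseteq> Cg Sig (U1 \<union> U2)"
      using U by (intro Cg_mono[OF wfSig]; blast)+
    hence "D1 \<union> D2 \<subseteq> Cg Sig (U1 \<union> U2)" using U12 by blast
    moreover have "Cg Sig (U1 \<union> U2) \<in> \<D>" using U12 by (auto simp: \<D>_def)
    ultimately show "\<exists>D3\<in>\<D>. D1 \<union> D2 \<subseteq> D3" by blast
  qed
  have "K_cong_set Sig D" if "D \<in> \<D>" for D
    using that U K_cong_set_Cg[OF wfSig] by (auto simp: \<D>_def)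
  hence "K_cong_set Sig (\<Union>\<D>)" unfolding K_cong_set_def
    using updirected_Union_is_cong_set[OF dir, of af ar F] updirected_Union_closed_under[OF dir, of Sig F]
    by simp
  moreover have "U \<subseteq> \<Union>\<D>"
  proof
    fix u assume u: "u \<in> U"
    hence "u \<in> Cg Sig {u}" using U Cg_ext[of "{u}" Sig] by blast
    moreover have "Cg Sig {u} \<in> \<D>" using u by (auto simp: \<D>_def)
    ultimately show "u \<in> \<Union>\<D>" by blast
  qed
  ultimately have "G \<subseteq> \<Union>\<D>" using G(2) Cg_least by blast
  then obtain D where "D \<in> \<D>" "G \<subseteq> D" using updirected_finite_subset[OF dir G(1)] by blast
  thus ?thesis by (auto simp: \<D>_def)
qed

lemma compact_ConF_finitely_generated:
  assumes c: "compact ConF x"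
  shows "\<exists>G. finite G \<and> G \<subseteq> FA \<and> x = cong_of (Cg Sig G)"
proof -
  have csx: "K_cong_set Sig (atoms x)" using c ConF_iff by (simp add: compact_def)
  have ox: "atoms x \<subseteq> FA" using K_cong_set_fatoms[OF csx] .
  define S where "S = (\<lambda>al. cong_of (Cg Sig {al})) ` atoms x"
  have S: "S \<subseteq> ConF" unfolding S_def using cong_of_Cg_ConF ox by blast
  have atoms_lub: "atoms (lub ConF ((\<lambda>al. cong_of (Cg Sig {al})) ` G)) = Cg Sig G" if "G \<subseteq> FA" for G
  proof -
    have "(\<lambda>al. cong_of (Cg Sig {al})) ` G \<subseteq> ConF" using that cong_of_Cg_ConF by blast
    hence "atoms (lub ConF ((\<lambda>al. cong_of (Cg Sig {al})) ` G)) = Cg Sig (\<Union>al\<in>G. Cg Sig {al})"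
      by (simp add: atoms_lub_ConF image_image)
    thus ?thesis using Cg_Union_singletons[OF that] by simp
  qed
  have "cle x (lub ConF S)"
    unfolding cle_iff_atoms S_def atoms_lub[OF ox] Cg_K_cong_set[OF csx] ..
  then obtain S' where S': "S' \<subseteq> S" "finite S'" "cle x (lub ConF S')"
    using c S unfolding compact_def by blast
  then obtain G where G: "G \<subseteq> atoms x" "finite G" "S' = (\<lambda>al. cong_of (Cg Sig {al})) ` G"
    unfolding S_def by (meson finite_subset_image)
  have "atoms x \<subseteq> Cg Sig G" using S'(3) G ox atoms_lub[of G] by (simp add: cle_iff_atoms)
  moreover have "Cg Sig G \<subseteq> atoms x" using Cg_least[OF csx G(1)] .
  ultimately have "x = cong_of (Cg Sig G)" by (metis cong_of_atoms subset_antisym)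
  thus ?thesis using G ox by blast
qed

lemma finitely_generated_compact_ConF:
  assumes G: "finite G" "G \<subseteq> FA"
  shows "compact ConF (cong_of (Cg Sig G))"
  unfolding compact_def
proof (intro conjI allI impI)
  show "cong_of (Cg Sig G) \<in> ConF" using G cong_of_Cg_ConF by simp
next
  fix S assume S: "S \<subseteq> ConF" and cl: "cle (cong_of (Cg Sig G)) (lub ConF S)"
  have U: "\<Union>(atoms ` S) \<subseteq> FA" using S ConF_iff K_cong_set_fatoms by blast
  have "G \<subseteq> Cg Sig (\<Union>(atoms ` S))"
    using cl Cg_ext[of G Sig] atoms_lub_ConF[OF S] by (auto simp: cle_iff_atoms)
  then obtain U' where U': "U' \<subseteq> \<Union>(atoms ` S)" "finite U'" "G \<subseteq> Cg Sig U'"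
    using Cg_finitary[OF U G(1)] by blast
  obtain FF where FF: "finite FF" "FF \<subseteq> atoms ` S" "U' \<subseteq> \<Union>FF"
    using finite_subset_Union[OF U'(2) U'(1)] by blast
  obtain S' where S': "S' \<subseteq> S" "finite S'" "FF = atoms ` S'"
    using finite_subset_image[OF FF(1,2)] by blast
  have S'L: "S' \<subseteq> ConF" using S' S by blast
  have "\<Union>(atoms ` S') \<subseteq> FA" using S'L ConF_iff K_cong_set_fatoms by blast
  hence "Cg Sig U' \<subseteq> atoms (lub ConF S')"
    using Cg_mono[OF wfSig] FF(3) S'(3) atoms_lub_ConF[OF S'L] by simp
  moreover have "K_cong_set Sig (atoms (lub ConF S'))"
    using ConF_iff lub_ConF[OF S'L] cong_of_Cg_ConF \<open>\<Union>(atoms ` S') \<subseteq> FA\<close> by metis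
  ultimately have "cle (cong_of (Cg Sig G)) (lub ConF S')"
    using U'(3) Cg_least by (simp add: cle_iff_atoms)
  thus "\<exists>S'. S' \<subseteq> S \<and> finite S' \<and> cle (cong_of (Cg Sig G)) (lub ConF S')" using S' by blast
qed

lemma TF_iff: "x \<in> TF \<longleftrightarrow> (\<exists>G. finite G \<and> G \<subseteq> FA \<and> x = cong_of (Cg Sig G))"
  unfolding TnK_def using compact_ConF_finitely_generated finitely_generated_compact_ConF by blast

lemma TF_ConF: "x \<in> TF \<Longrightarrow> x \<in> ConF"
  using TF_iff cong_of_Cg_ConF by auto

lemma TF_K_cong_set: "x \<in> TF \<Longrightarrow> K_cong_set Sig (atoms x)"
  using TF_ConF ConF_iff by blast

lemma TF_fatoms: "x \<in> TF \<Longrightarrow> atoms x \<subseteq> FA"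
  using TF_K_cong_set K_cong_set_fatoms by blast

lemma cong_of_Cg_TF: "finite G \<Longrightarrow> G \<subseteq> FA \<Longrightarrow> cong_of (Cg Sig G) \<in> TF"
  using TF_iff by blast

lemma join_ConF:
  assumes "a \<in> ConF" "b \<in> ConF"
  shows "lub ConF {a,b} = cong_of (Cg Sig (atoms a \<union> atoms b))"
  using lub_ConF[of "{a,b}"] assms by simp

lemma join_TF:
  assumes a: "a \<in> TF" and b: "b \<in> TF"
  shows "lub ConF {a,b} \<in> TF"
proof -
  obtain G where G: "finite G" "G \<subseteq> FA" "a = cong_of (Cg Sig G)" using a TF_iff by blast
  obtain H where H: "finite H" "H \<subseteq> FA" "b = cong_of (Cg Sig H)" using b TF_iff by blast
  have "lub ConF {a,b} = cong_of (Cg Sig (G \<union> H))"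
    using join_ConF[OF TF_ConF[OF a] TF_ConF[OF b]] G H Cg_Un[OF wfSig G(2) H(2)] by simp
  thus ?thesis using cong_of_Cg_TF G H by simp
qed

lemma join_ConF_absorb:
  assumes x: "x \<in> ConF" and y: "y \<in> ConF" and xy: "atoms x \<subseteq> atoms y"
  shows "lub ConF {x,y} = y" "lub ConF {y,x} = y"
proof -
  have "lub ConF {x,y} = cong_of (Cg Sig (atoms x \<union> atoms y))" using join_ConF[OF x y] .
  also have "atoms x \<union> atoms y = atoms y" using xy by blast
  also have "Cg Sig (atoms y) = atoms y" using Cg_K_cong_set ConF_iff y by blast
  finally show "lub ConF {x,y} = y" by simp
  thus "lub ConF {y,x} = y" by (simp add: insert_commute)
qed

lemma join_ConF_idem: "x \<in> ConF \<Longrightarrow> lub ConF {x,x} = x"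
  using join_ConF_absorb(1)[of x x] by simp

lemma atoms_join_ConF:
  "x \<in> ConF \<Longrightarrow> y \<in> ConF \<Longrightarrow> atoms (lub ConF {x,y}) = Cg Sig (atoms x \<union> atoms y)"
  using join_ConF by simp

lemma atoms_join_ConF_upper:
  assumes x: "x \<in> ConF" and y: "y \<in> ConF"
  shows "atoms x \<subseteq> atoms (lub ConF {x,y})" "atoms y \<subseteq> atoms (lub ConF {x,y})"
  using atoms_join_ConF[OF x y] Cg_ext[of "atoms x \<union> atoms y" Sig] by blast+

lemma Cg_fatom_map_subset:
  assumes X: "\<forall>q\<in>X. wf_qid af ar q" and e: "is_hom af F F e" and G: "G \<subseteq> FA" and H: "H \<subseteq> FA"
    and GH: "G \<subseteq> Cg X H"
  shows "fatom_map e ` G \<subseteq> Cg X (fatom_map e ` H)"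
proof -
  have eH: "fatom_map e ` H \<subseteq> FA" using H fatom_map_in_fatoms[OF e] by blast
  define D where "D = Cg X (fatom_map e ` H)"
  have D: "is_cong_set af ar F D \<and> closed_under X F D"
    using K_cong_set_Cg[OF X eH] unfolding D_def K_cong_set_def .
  have P: "K_cong_set X {al \<in> FA. fatom_map e al \<in> D}"
    using is_cong_set_vimage[OF is_struc_F e] closed_under_vimage[OF is_struc_F e X] D
    unfolding K_cong_set_def by blast
  have "H \<subseteq> {al \<in> FA. fatom_map e al \<in> D}" using H Cg_ext[of "fatom_map e ` H" X] unfolding D_def by blast
  hence "Cg X H \<subseteq> {al \<in> FA. fatom_map e al \<in> D}" using Cg_least[OF P] by blast
  thus ?thesis using GH unfolding D_def by blast
qed

lemma Cg_fatom_map_eq: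
  assumes X: "\<forall>q\<in>X. wf_qid af ar q" and e: "is_hom af F F e" and G: "G \<subseteq> FA" and H: "H \<subseteq> FA"
    and GH: "Cg X G = Cg X H"
  shows "Cg X (fatom_map e ` G) = Cg X (fatom_map e ` H)"
proof -
  have eG: "fatom_map e ` G \<subseteq> FA" using G fatom_map_in_fatoms[OF e] by blast
  have eH: "fatom_map e ` H \<subseteq> FA" using H fatom_map_in_fatoms[OF e] by blast
  have "fatom_map e ` G \<subseteq> Cg X (fatom_map e ` H)"
    using Cg_fatom_map_subset[OF X e G H] GH Cg_ext[of G X] by blast
  hence 1: "Cg X (fatom_map e ` G) \<subseteq> Cg X (fatom_map e ` H)"
    using Cg_least[OF K_cong_set_Cg[OF X eH]] by blast
  have "fatom_map e ` H \<subseteq> Cg X (fatom_map e ` G)"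
    using Cg_fatom_map_subset[OF X e H G] GH Cg_ext[of H X] by blast
  hence 2: "Cg X (fatom_map e ` H) \<subseteq> Cg X (fatom_map e ` G)"
    using Cg_least[OF K_cong_set_Cg[OF X eG]] by blast
  show ?thesis using 1 2 by blast
qed

lemma hat_cong_of_Cg:
  assumes e: "is_hom af F F e" and G: "set als \<subseteq> FA"
  shows "hat ar F ConF e (cong_of (Cg Sig (set als))) = cong_of (Cg Sig (fatom_map e ` set als))"
proof -
  have eG: "fatom_map e ` set als \<subseteq> FA" using G fatom_map_in_fatoms[OF e] by blast
  show ?thesis unfolding hat_def
  proof (rule the_equality)
    show "\<exists>als'. (\<forall>al\<in>set als'. fatom_over ar F al) \<and>
        cong_of (Cg Sig (set als)) = lub ConF (pcon ConF ` set als') \<and>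
        cong_of (Cg Sig (fatom_map e ` set als)) = lub ConF (pcon ConF ` fatom_map e ` set als')"
      using G lub_pcon_ConF[OF G] lub_pcon_ConF[OF eG]
      by (intro exI[of _ als]) (auto simp: fatoms_def)
  next
    fix ps assume "\<exists>als'. (\<forall>al\<in>set als'. fatom_over ar F al) \<and>
        cong_of (Cg Sig (set als)) = lub ConF (pcon ConF ` set als') \<and>
        ps = lub ConF (pcon ConF ` fatom_map e ` set als')"
    then obtain als' where a: "set als' \<subseteq> FA"
        "cong_of (Cg Sig (set als)) = lub ConF (pcon ConF ` set als')"
        "ps = lub ConF (pcon ConF ` fatom_map e ` set als')" by (auto simp: fatoms_def)
    have eG': "fatom_map e ` set als' \<subseteq> FA" using a(1) fatom_map_in_fatoms[OF e] by blast
    have "Cg Sig (set als) = Cg Sig (set als')"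
      using a(2) lub_pcon_ConF[OF a(1)] atoms_inject by (metis atoms_cong_of)
    hence "Cg Sig (fatom_map e ` set als) = Cg Sig (fatom_map e ` set als')"
      using Cg_fatom_map_eq[OF wfSig e G a(1)] by blast
    thus "ps = cong_of (Cg Sig (fatom_map e ` set als))" using a(3) lub_pcon_ConF[OF eG'] by simp
  qed
qed

section \<open>The congruence of \<open>S\<^sub>n\<close> induced by a theory\<close>

definition K_theory :: "('f,'r) qid set \<Rightarrow> bool" where
  "K_theory T \<longleftrightarrow> qe_theory af ar T \<and> Cn af ar Sig \<subseteq> T"

lemma K_theory_wf: "K_theory T \<Longrightarrow> \<forall>q\<in>T. wf_qid af ar q"
  unfolding K_theory_def qe_theory_def using Cn_wf by metis

lemma K_theory_Sig: "K_theory T \<Longrightarrow> Sig \<subseteq> T"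
  unfolding K_theory_def using Cn_ext[OF wfSig] by blast

lemma K_theory_Cn: "K_theory T \<Longrightarrow> Cn af ar T = T"
  unfolding K_theory_def qe_theory_def by blast

lemma QTheories_K_theory: "T \<in> QTheories af ar Sig n \<Longrightarrow> K_theory T"
  unfolding QTheories_def K_theory_def by blast

text \<open>\<open>Cn\<close> quantifies only over structures on \<open>('f,nat) trm set\<close>, while \<open>F/\<theta>\<close> lives on sets of
  such sets; \<open>\<Union>\<close> is injective on its carrier, so \<open>F/\<theta>\<close> can be transported to the smaller type.\<close>
lemma inj_on_Union_quot_F:
  assumes c: "is_cong af ar F th"
  shows "inj_on Union (carrier (quot F th))"
proof (rule inj_onI)
  have eq: "equiv (carrier F) (fst th)" using is_congD(1)[OF c] .
  fix C1 C2 assume C1: "C1 \<in> carrier (quot F th)" and C2: "C2 \<in> carrier (quot F th)" and U: "\<Union>C1 = \<Union>C2"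
  have q1: "C1 \<in> carrier F // fst th" and q2: "C2 \<in> carrier F // fst th"
    using C1 C2 by (auto simp: quot_def)
  obtain x where x: "x \<in> C1" using in_quotient_imp_non_empty[OF eq q1] by blast
  have xc: "x \<in> carrier F" using x q1 eq by (meson in_quotient_imp_subset subsetD)
  then obtain t where t: "t \<in> Tms" "x = fc t" using carrier_F by auto
  have "t \<in> x" using t fc_self by simp
  hence "t \<in> \<Union>C2" using x U by blast
  then obtain y where y: "y \<in> C2" "t \<in> y" by blast
  have yc: "y \<in> carrier F" using y q2 eq by (meson in_quotient_imp_subset subsetD)
  then obtain t' where t': "t' \<in> Tms" "y = fc t'" using carrier_F by auto
  have "fc t = fc t'" using fc_eq[OF _ t'(1)] y(2) t'(2) by simp
  hence "x = y" using t t' by simp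
  hence "C1 \<inter> C2 \<noteq> {}" using x y by blast
  thus "C1 = C2" using quotient_disj[OF eq q1 q2] by blast
qed

lemma model_Cn_quot_F:
  assumes c: "is_cong af ar F th" and X: "\<forall>q\<in>X. wf_qid af ar q" and m: "model af ar X (quot F th)"
  shows "model af ar (Cn af ar X) (quot F th)"
proof -
  have Q: "is_struc af ar (quot F th)" using is_struc_quot[OF is_struc_F c] .
  note inj = inj_on_Union_quot_F[OF c]
  have "model af ar X (image_struc Union (quot F th))" using model_image_iff[OF Q inj X] m by blast
  hence "model af ar (Cn af ar X) (image_struc Union (quot F th))" by (rule model_Cn)
  moreover have "\<forall>q\<in>Cn af ar X. wf_qid af ar q" using Cn_wf by blast
  ultimately show ?thesis using model_image_iff[OF Q inj] by blast
qed

lemma Cg_Cg_Sig: "K_theory T \<Longrightarrow> G \<subseteq> FA \<Longrightarrow> Cg T (Cg Sig G) = Cg T G"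
  using Cg_Cg[OF wfSig K_theory_wf K_theory_Sig] by blast

lemma K_cong_set_kernel_free_ext:
  fixes A :: "(('f,nat) trm set,'f,'r) struc"
  assumes T: "K_theory T" and mT: "model af ar T A" and h: "range h \<subseteq> carrier A"
  shows "K_cong_set T {al \<in> FA. fatom_map (free_ext A h) al \<in> true_atoms A}"
proof -
  have A: "is_struc af ar A" and sat: "\<forall>q\<in>T. sat_qid A q" using mT by (auto simp: model_def)
  have "model af ar Sig A" using mT K_theory_Sig[OF T] by (auto simp: model_def)
  note g = is_hom_free_ext[OF this h]
  show ?thesis unfolding K_cong_set_def
    using is_cong_set_vimage[OF is_struc_F g is_cong_set_true_atoms[OF A]]
      closed_under_vimage[OF is_struc_F g K_theory_wf[OF T]
        closed_under_true_atoms[OF A K_theory_wf[OF T] sat]]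
    by blast
qed

text \<open>Evaluating a quasi-identity at the free generators shows that membership in \<open>T\<close> forces
  membership in the generated \<open>T\<close>-congruence; conversely every model of \<open>T\<close> is reached from \<open>F\<close>
  by a homomorphism whose kernel is a \<open>T\<close>-congruence.\<close>
lemma theory_mem_imp_Cg:
  assumes T: "K_theory T" and q: "(ps, b) \<in> T" and ps: "\<forall>p\<in>set ps. n_atom p" and b: "n_atom b"
  shows "fatom_of b \<in> Cg T (fatom_of ` set ps)"
proof -
  have wT: "\<forall>q\<in>T. wf_qid af ar q" using K_theory_wf[OF T] .
  have G: "fatom_of ` set ps \<subseteq> FA" using ps fatom_of_in_fatoms by blast
  have "closed_under T F (Cg T (fatom_of ` set ps))"
    using K_cong_set_Cg[OF wT G] by (simp add: K_cong_set_def)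
  moreover have "eval_atom F gen_assign p \<in> Cg T (fatom_of ` set ps)" if "p \<in> set ps" for p
    using that ps eval_atom_gen_assign Cg_ext[of "fatom_of ` set ps" T] by auto
  ultimately have "eval_atom F gen_assign b \<in> Cg T (fatom_of ` set ps)"
    using closed_underD[OF _ q gen_assign_carrier] by fastforce
  thus ?thesis using eval_atom_gen_assign[OF b] by simp
qed

lemma Cg_imp_theory_mem:
  assumes T: "K_theory T" and ps: "\<forall>p\<in>set ps. n_atom p" and b: "n_atom b"
    and fb: "fatom_of b \<in> Cg T (fatom_of ` set ps)"
  shows "(ps, b) \<in> T"
proof -
  have "sat_qid A (ps, b)" if mT: "model af ar T A" for A :: "(('f,nat) trm set,'f,'r) struc"
    unfolding sat_qid_def
  proof (intro allI impI)
    fix h :: "nat \<Rightarrow> _" assume h: "range h \<subseteq> carrier A" and p: "\<forall>p\<in>set (fst (ps, b)). holds A h p"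
    define K where "K = {al \<in> FA. fatom_map (free_ext A h) al \<in> true_atoms A}"
    have A: "is_struc af ar A" and mS: "model af ar Sig A"
      using mT K_theory_Sig[OF T] by (auto simp: model_def)
    have h': "\<forall>v. h v \<in> carrier A" using h by auto
    have holds_K: "holds A h a \<longleftrightarrow> fatom_of a \<in> K" if "n_atom a" for a
      using holds_iff_true_atoms[OF A n_atom_wf[OF that] h'] free_ext_fatom_of[OF mS h that]
        fatom_of_in_fatoms[OF that] by (simp add: K_def)
    have "fatom_of ` set ps \<subseteq> K" using p ps holds_K by auto
    hence "fatom_of b \<in> K"
      using Cg_least K_cong_set_kernel_free_ext[OF T mT h] fb unfolding K_def by blast
    thus "holds A h (snd (ps, b))" using holds_K[OF b] by simp
  qed
  moreover have "wf_qid af ar (ps, b)" using ps b by (simp add: wf_qid_def n_atom_def)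
  ultimately have "(ps, b) \<in> Cn af ar T" by (simp add: Cn_def)
  thus ?thesis using K_theory_Cn[OF T] by simp
qed

lemma fatoms_F_list:
  assumes "finite G" "G \<subseteq> FA"
  shows "\<exists>ps. (\<forall>p\<in>set ps. n_atom p) \<and> fatom_of ` set ps = G"
proof -
  have "G \<subseteq> fatom_of ` {a. n_atom a}" using assms(2) fatoms_F_fatom_of by blast
  then obtain C where "C \<subseteq> {a. n_atom a}" "finite C" "G = fatom_of ` C"
    using finite_subset_image[OF assms(1)] by blast
  moreover obtain ps where "set ps = C" using finite_list[OF \<open>finite C\<close>] by blast
  ultimately show ?thesis by blast
qed

lemma n_atom_renaming:
  assumes w: "wf_qid af ar q" and c: "card (qvars q) \<le> n"
  shows "\<exists>ps b. (\<forall>p\<in>set ps. n_atom p) \<and> n_atom b \<and> (\<forall>X. q \<in> Cn af ar X \<longleftrightarrow> (ps, b) \<in> Cn af ar X)"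
proof -
  obtain \<rho> where \<rho>: "bij_betw \<rho> (qvars q) {0..<card (qvars q)}"
    using ex_bij_betw_finite_nat[OF finite_qvars] by blast
  define q' where "q' = rename_qid \<rho> q"
  have "qvars q' \<subseteq> {..<n}" using \<rho> c by (auto simp: q'_def qvars_rename_qid bij_betw_def)
  hence "(\<forall>p\<in>set (fst q'). n_atom p) \<and> n_atom (snd q')"
    using wf_qid_rename_qid[OF w, of \<rho>] by (auto simp: n_atom_def qvars_def wf_qid_def q'_def)
  moreover have "\<forall>X. q \<in> Cn af ar X \<longleftrightarrow> q' \<in> Cn af ar X"
    using Cn_rename_qid[OF w] \<rho> by (simp add: q'_def bij_betw_def)
  ultimately show ?thesis by (metis prod.collapse)
qed

definition kernel :: "('f,'r) qid set \<Rightarrow> ((('f,nat) trm set,'r) cong \<times> (('f,nat) trm set,'r) cong) set" where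
  "kernel T = {(a,b). a \<in> TF \<and> b \<in> TF \<and> Cg T (atoms a) = Cg T (atoms b)}"

definition qid_pair :: "('f,'r,nat) atom list \<Rightarrow> ('f,'r,nat) atom \<Rightarrow>
    (('f,nat) trm set,'r) cong \<times> (('f,nat) trm set,'r) cong" where
  "qid_pair ps b = (cong_of (Cg Sig (fatom_of ` set ps)), cong_of (Cg Sig (insert (fatom_of b) (fatom_of ` set ps))))"

lemma Cg_insert_eq_iff:
  assumes X: "\<forall>q\<in>X. wf_qid af ar q" and G: "insert al G \<subseteq> FA"
  shows "Cg X (insert al G) = Cg X G \<longleftrightarrow> al \<in> Cg X G"
proof
  assume "Cg X (insert al G) = Cg X G"
  thus "al \<in> Cg X G" using Cg_ext[of "insert al G" X] by blast
next
  assume "al \<in> Cg X G"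
  thus "Cg X (insert al G) = Cg X G" using G Cg_ext[of G X] by (intro Cg_eqI[OF X]) auto
qed

lemma qid_pair_kernel_iff:
  assumes T: "K_theory T" and ps: "\<forall>p\<in>set ps. n_atom p" and b: "n_atom b"
  shows "qid_pair ps b \<in> kernel T \<longleftrightarrow> (ps, b) \<in> T"
proof -
  let ?G = "fatom_of ` set ps"
  have G: "insert (fatom_of b) ?G \<subseteq> FA" using ps b fatom_of_in_fatoms by auto
  hence "qid_pair ps b \<in> kernel T \<longleftrightarrow> Cg T (Cg Sig ?G) = Cg T (Cg Sig (insert (fatom_of b) ?G))"
    using cong_of_Cg_TF by (simp add: kernel_def qid_pair_def)
  also have "\<dots> \<longleftrightarrow> Cg T (insert (fatom_of b) ?G) = Cg T ?G"
    using Cg_Cg_Sig[OF T] G by auto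
  also have "\<dots> \<longleftrightarrow> (ps, b) \<in> T"
    using Cg_insert_eq_iff[OF K_theory_wf[OF T] G] theory_mem_imp_Cg[OF T _ ps b]
      Cg_imp_theory_mem[OF T ps b] by blast
  finally show ?thesis .
qed

lemma equiv_kernel: "equiv TF (kernel T)"
  unfolding equiv_def refl_on_def sym_def trans_def kernel_def by auto

lemma Cg_atoms_join:
  assumes T: "K_theory T" and x: "x \<in> TF" and y: "y \<in> TF"
  shows "Cg T (atoms (lub ConF {x,y})) = Cg T (Cg T (atoms x) \<union> Cg T (atoms y))"
proof -
  have o: "atoms x \<subseteq> FA" "atoms y \<subseteq> FA" using TF_fatoms x y by auto
  have "Cg T (atoms (lub ConF {x,y})) = Cg T (atoms x \<union> atoms y)"
    using join_ConF[OF TF_ConF[OF x] TF_ConF[OF y]] Cg_Cg_Sig[OF T] o by simp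
  thus ?thesis using Cg_Un[OF K_theory_wf[OF T] o] by simp
qed

lemma kernel_join:
  assumes T: "K_theory T" and "(a,b) \<in> kernel T" "(c,d) \<in> kernel T"
  shows "(lub ConF {a,c}, lub ConF {b,d}) \<in> kernel T"
  using assms join_TF Cg_atoms_join[OF T] by (auto simp: kernel_def)

lemma TF_list: "a \<in> TF \<Longrightarrow> \<exists>als. set als \<subseteq> FA \<and> a = cong_of (Cg Sig (set als))"
  using TF_iff finite_list by metis

lemma kernel_hat:
  assumes T: "K_theory T" and e: "is_hom af F F e" and ab: "(a,b) \<in> kernel T"
  shows "(hat ar F ConF e a, hat ar F ConF e b) \<in> kernel T"
proof -
  have wT: "\<forall>q\<in>T. wf_qid af ar q" using K_theory_wf[OF T] .
  have ab': "a \<in> TF" "b \<in> TF" "Cg T (atoms a) = Cg T (atoms b)" using ab by (auto simp: kernel_def)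
  obtain als where a: "set als \<subseteq> FA" "a = cong_of (Cg Sig (set als))"
    using TF_list[OF ab'(1)] by blast
  obtain bls where b: "set bls \<subseteq> FA" "b = cong_of (Cg Sig (set bls))"
    using TF_list[OF ab'(2)] by blast
  have ea: "fatom_map e ` set als \<subseteq> FA" and eb: "fatom_map e ` set bls \<subseteq> FA"
    using a b fatom_map_in_fatoms[OF e] by auto
  have ha: "hat ar F ConF e a = cong_of (Cg Sig (fatom_map e ` set als))"
    using hat_cong_of_Cg[OF e a(1)] a(2) by simp
  have hb: "hat ar F ConF e b = cong_of (Cg Sig (fatom_map e ` set bls))"
    using hat_cong_of_Cg[OF e b(1)] b(2) by simp
  have "Cg T (set als) = Cg T (set bls)" using ab'(3) a b Cg_Cg_Sig[OF T] by simp
  hence "Cg T (fatom_map e ` set als) = Cg T (fatom_map e ` set bls)"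
    using Cg_fatom_map_eq[OF wT e a(1) b(1)] by blast
  thus ?thesis unfolding kernel_def using ha hb Cg_Cg_Sig[OF T] cong_of_Cg_TF ea eb by simp
qed

lemma kernel_in_ConSn: "K_theory T \<Longrightarrow> kernel T \<in> ConSn af ar Sig n"
  unfolding ConSn_def Let_def using equiv_kernel kernel_join kernel_hat by blast

lemma kernel_mono:
  assumes T1: "K_theory T1" and T2: "K_theory T2" and T12: "T1 \<subseteq> T2"
  shows "kernel T1 \<subseteq> kernel T2"
proof
  fix p assume "p \<in> kernel T1"
  then obtain a b where p: "p = (a,b)" "a \<in> TF" "b \<in> TF" "Cg T1 (atoms a) = Cg T1 (atoms b)"
    by (auto simp: kernel_def)
  note Cg_T2 = Cg_Cg[OF K_theory_wf[OF T1] K_theory_wf[OF T2] T12 TF_fatoms]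
  have "Cg T2 (atoms a) = Cg T2 (atoms b)" using Cg_T2[OF p(2)] Cg_T2[OF p(3)] p(4) by metis
  thus "p \<in> kernel T2" using p by (simp add: kernel_def)
qed

lemma kernel_reflects:
  assumes T1: "T1 \<in> QTheories af ar Sig n" and T2: "K_theory T2" and K: "kernel T1 \<subseteq> kernel T2"
  shows "T1 \<subseteq> T2"
proof -
  obtain Ph where Ph: "\<forall>q\<in>Ph. wf_qid af ar q \<and> card (qvars q) \<le> n" "T1 = Cn af ar (Sig \<union> Ph)"
    using T1 unfolding QTheories_def by blast
  have T1': "K_theory T1" using QTheories_K_theory[OF T1] .
  have "q \<in> T2" if q: "q \<in> Ph" for q
  proof -
    obtain ps b where r: "\<forall>p\<in>set ps. n_atom p" "n_atom b" "\<And>X. q \<in> Cn af ar X \<longleftrightarrow> (ps, b) \<in> Cn af ar X"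
      using n_atom_renaming Ph(1) q by blast
    have "q \<in> T1" using Cn_ext[of "Sig \<union> Ph"] wfSig Ph q by blast
    hence "(ps, b) \<in> T1" using r(3)[of T1] K_theory_Cn[OF T1'] by simp
    hence "(ps, b) \<in> T2"
      using qid_pair_kernel_iff[OF T1' r(1,2)] qid_pair_kernel_iff[OF T2 r(1,2)] K by blast
    thus "q \<in> T2" using r(3)[of T2] K_theory_Cn[OF T2] by simp
  qed
  hence "Sig \<union> Ph \<subseteq> T2" using K_theory_Sig[OF T2] by blast
  thus ?thesis using Cn_mono[of "Sig \<union> Ph" T2 af ar] Ph(2) K_theory_Cn[OF T2] by simp
qed

end

section \<open>Every congruence of \<open>S\<^sub>n\<close> is induced by a theory\<close>

locale Sn_congruence = free_structure af ar Sig n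
  for af :: "'f \<Rightarrow> nat" and ar :: "'r \<Rightarrow> nat" and Sig n +
  fixes E
  assumes E: "E \<in> ConSn af ar Sig n"
begin

lemma E_equiv: "equiv TF E"
  and E_join: "(a,b) \<in> E \<Longrightarrow> (c,d) \<in> E \<Longrightarrow> (lub ConF {a,c}, lub ConF {b,d}) \<in> E"
  and E_hat: "is_hom af F F e \<Longrightarrow> (a,b) \<in> E \<Longrightarrow> (hat ar F ConF e a, hat ar F ConF e b) \<in> E"
  using E unfolding ConSn_def Let_def by blast+

lemma E_TF: "(a,b) \<in> E \<Longrightarrow> a \<in> TF \<and> b \<in> TF"
  using E_equiv by (auto simp: equiv_def)

lemma E_refl: "a \<in> TF \<Longrightarrow> (a,a) \<in> E"
  using E_equiv by (auto simp: equiv_def refl_on_def)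

lemma E_sym: "(a,b) \<in> E \<Longrightarrow> (b,a) \<in> E"
  using E_equiv by (auto simp: equiv_def dest: symD)

lemma E_trans: "(a,b) \<in> E \<Longrightarrow> (b,c) \<in> E \<Longrightarrow> (a,c) \<in> E"
  using E_equiv by (auto simp: equiv_def dest: transD)

definition E_axioms :: "('f,'r) qid set" where
  "E_axioms = {(ps, b). (\<forall>p\<in>set ps. n_atom p) \<and> n_atom b \<and> qid_pair ps b \<in> E}"

definition E_theory :: "('f,'r) qid set" where
  "E_theory = Cn af ar (Sig \<union> E_axioms)"

lemma wf_Sig_E_axioms: "\<forall>q\<in>Sig \<union> E_axioms. wf_qid af ar q"
  using wfSig by (auto simp: E_axioms_def wf_qid_def n_atom_def)

lemma K_theory_E_theory: "K_theory E_theory"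
  unfolding K_theory_def qe_theory_def E_theory_def
  using Cn_idem Cn_mono[of Sig "Sig \<union> E_axioms" af ar] by blast

lemma E_axioms_subset_E_theory: "E_axioms \<subseteq> E_theory"
  unfolding E_theory_def using Cn_ext[OF wf_Sig_E_axioms] by blast

lemma E_theory_QTheories: "E_theory \<in> QTheories af ar Sig n"
proof -
  have "card (qvars q) \<le> n" if "q \<in> E_axioms" for q
  proof -
    have "qvars q \<subseteq> {..<n}" using that by (auto simp: E_axioms_def qvars_def n_atom_def)
    thus ?thesis using card_mono[of "{..<n}"] by fastforce
  qed
  thus ?thesis using K_theory_E_theory wf_Sig_E_axioms
    unfolding QTheories_def K_theory_def E_theory_def by blast
qed

text \<open>If \<open>a \<le> c\<close> are \<open>E\<close>-related, then adjoining one atom \<open>g\<close> of \<open>c\<close> to (generators of) \<open>a\<close> gives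
  \<open>a \<le> a' \<le> c\<close>, so \<open>a' = a' \<or> a\<close> and \<open>c = a' \<or> c\<close> are \<open>E\<close>-related; hence \<open>(a, a') \<in> E\<close> and the
  quasi-identity "generators of \<open>a\<close> \<Rightarrow> \<open>g\<close>" is an axiom of \<open>E_theory\<close>.\<close>
lemma E_related_above_Cg:
  assumes a: "a \<in> TF" and c: "c \<in> TF" and ac: "(a,c) \<in> E" and sub: "atoms a \<subseteq> atoms c"
  shows "atoms c \<subseteq> Cg E_theory (atoms a)"
proof
  fix g assume g: "g \<in> atoms c"
  obtain G where G: "finite G" "G \<subseteq> FA" "a = cong_of (Cg Sig G)" using a TF_iff by blast
  obtain ps where ps: "\<forall>p\<in>set ps. n_atom p" "fatom_of ` set ps = G"
    using fatoms_F_list[OF G(1,2)] by blast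
  have gG: "insert g G \<subseteq> FA" using g TF_fatoms[OF c] G(2) by blast
  obtain b where b: "n_atom b" "g = fatom_of b" using fatoms_F_fatom_of gG by blast
  define a' where "a' = cong_of (Cg Sig (insert g G))"
  have a'T: "a' \<in> TF" using cong_of_Cg_TF G(1) gG by (simp add: a'_def)
  have "atoms a \<subseteq> atoms a'" using G(3) Cg_mono[OF wfSig _ gG] by (auto simp: a'_def)
  moreover have "insert g G \<subseteq> atoms c" using g sub G Cg_ext[of G Sig] by auto
  hence "atoms a' \<subseteq> atoms c" using Cg_least TF_K_cong_set[OF c] by (simp add: a'_def)
  ultimately have "lub ConF {a', a} = a'" "lub ConF {a', c} = c"
    using join_ConF_absorb TF_ConF[OF a] TF_ConF[OF a'T] TF_ConF[OF c] by auto
  hence "(a', c) \<in> E" using E_join[OF E_refl[OF a'T] ac] by simp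
  hence "(a, a') \<in> E" using ac E_sym E_trans by blast
  hence "qid_pair ps b \<in> E" by (simp add: qid_pair_def a'_def ps(2) b(2) G(3))
  hence "(ps, b) \<in> E_theory" using ps b E_axioms_subset_E_theory by (auto simp: E_axioms_def)
  hence "fatom_of b \<in> Cg E_theory G"
    using theory_mem_imp_Cg[OF K_theory_E_theory _ ps(1) b(1)] ps(2) by simp
  thus "g \<in> Cg E_theory (atoms a)" using Cg_Cg_Sig[OF K_theory_E_theory G(2)] G(3) b(2) by simp
qed

lemma E_subset_kernel: "E \<subseteq> kernel E_theory"
proof (clarify)
  fix a b assume ab: "(a,b) \<in> E"
  have T: "a \<in> TF" "b \<in> TF" using E_TF[OF ab] by auto
  define c where "c = lub ConF {a,b}"
  have cT: "c \<in> TF" using join_TF T by (simp add: c_def)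
  have "(a,c) \<in> E" "(c,b) \<in> E" using E_join[OF E_refl[OF T(1)] ab] E_join[OF ab E_refl[OF T(2)]]
    join_ConF_idem TF_ConF T by (simp_all add: c_def)
  hence E_c: "(a,c) \<in> E" "(b,c) \<in> E" using E_sym by auto
  have below: "atoms a \<subseteq> atoms c" "atoms b \<subseteq> atoms c"
    using atoms_join_ConF_upper TF_ConF T by (auto simp: c_def)
  have "Cg E_theory (atoms x) = Cg E_theory (atoms c)"
    if "x \<in> TF" "(x,c) \<in> E" "atoms x \<subseteq> atoms c" for x
  proof
    have wT: "\<forall>q\<in>E_theory. wf_qid af ar q" using K_theory_wf[OF K_theory_E_theory] .
    have o: "atoms x \<subseteq> FA" "atoms c \<subseteq> FA" using TF_fatoms that(1) cT by auto
    show "Cg E_theory (atoms x) \<subseteq> Cg E_theory (atoms c)" using Cg_mono[OF wT that(3) o(2)] .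
    show "Cg E_theory (atoms c) \<subseteq> Cg E_theory (atoms x)"
      using E_related_above_Cg[OF that(1) cT that(2,3)] Cg_least[OF K_cong_set_Cg[OF wT o(1)]]
        by blast
  qed
  hence "Cg E_theory (atoms a) = Cg E_theory (atoms b)" using T E_c below by metis
  thus "(a,b) \<in> kernel E_theory" using T by (simp add: kernel_def)
qed

definition E_up :: "(('f,nat) trm set,'r) cong \<Rightarrow> (('f,nat) trm set,'r) cong set" where
  "E_up a = {c \<in> TF. atoms a \<subseteq> atoms c \<and> (a,c) \<in> E}"

lemma E_up_self: "a \<in> TF \<Longrightarrow> a \<in> E_up a"
  using E_refl by (simp add: E_up_def)

lemma E_up_absorb:
  assumes c: "c \<in> E_up a" and xy: "(x,y) \<in> E" and xc: "atoms x \<subseteq> atoms c"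
  shows "lub ConF {y,c} \<in> E_up a" "atoms y \<subseteq> atoms (lub ConF {y,c})"
proof -
  have cT: "c \<in> TF" "atoms a \<subseteq> atoms c" "(a,c) \<in> E" and xT: "x \<in> TF" "y \<in> TF"
    using c E_TF[OF xy] by (auto simp: E_up_def)
  have "lub ConF {x, c} = c" using join_ConF_absorb TF_ConF xT cT xc by blast
  hence "(c, lub ConF {y,c}) \<in> E" using E_join[OF xy E_refl[OF cT(1)]] by simp
  moreover have "atoms c \<subseteq> atoms (lub ConF {y,c})" "atoms y \<subseteq> atoms (lub ConF {y,c})"
    using atoms_join_ConF_upper TF_ConF xT cT by blast+
  ultimately show "lub ConF {y,c} \<in> E_up a" "atoms y \<subseteq> atoms (lub ConF {y,c})"
    using cT E_trans join_TF[OF xT(2) cT(1)] by (auto simp: E_up_def)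
qed

lemma updirected_E_up:
  assumes a: "a \<in> TF"
  shows "updirected (atoms ` E_up a)"
  unfolding updirected_def
proof (intro conjI ballI)
  show "atoms ` E_up a \<noteq> {}" using E_up_self[OF a] by blast
  fix D1 D2 assume "D1 \<in> atoms ` E_up a" "D2 \<in> atoms ` E_up a"
  then obtain c1 c2 where c: "c1 \<in> E_up a" "c2 \<in> E_up a" "D1 = atoms c1" "D2 = atoms c2" by blast
  hence c12: "c1 \<in> TF" "c2 \<in> TF" "(a,c1) \<in> E" "(a,c2) \<in> E" "atoms a \<subseteq> atoms c1"
    by (auto simp: E_up_def)
  have "(a, lub ConF {c1,c2}) \<in> E" using E_join[OF c12(3,4)] join_ConF_idem TF_ConF[OF a] by simp
  moreover have up: "D1 \<union> D2 \<subseteq> atoms (lub ConF {c1,c2})"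
    using atoms_join_ConF_upper TF_ConF c c12 by blast
  ultimately have "lub ConF {c1,c2} \<in> E_up a"
    unfolding E_up_def using join_TF c12 c by blast
  thus "\<exists>D3\<in>atoms ` E_up a. D1 \<union> D2 \<subseteq> D3" using up by blast
qed

text \<open>The substitution instance of an axiom under \<open>k\<close> is the image of the axiom's pair under
  \<open>hat e\<close> for the endomorphism \<open>e\<close> of \<open>F\<close> extending \<open>k\<close>.\<close>
lemma E_axioms_instance:
  assumes q: "(ps, b) \<in> E_axioms" and k: "range k \<subseteq> carrier F"
  shows "(cong_of (Cg Sig (eval_atom F k ` set ps)),
          cong_of (Cg Sig (insert (eval_atom F k b) (eval_atom F k ` set ps)))) \<in> E"
proof -
  have ps: "\<forall>p\<in>set ps. n_atom p" and b: "n_atom b"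
    and qE: "(cong_of (Cg Sig (fatom_of ` set ps)), cong_of (Cg Sig (fatom_of ` set (b # ps)))) \<in> E"
    using q by (auto simp: E_axioms_def qid_pair_def)
  define e where "e = free_ext F k"
  have e: "is_hom af F F e" using is_hom_free_ext[OF model_F k] by (simp add: e_def)
  have fe: "fatom_map e ` fatom_of ` A = eval_atom F k ` A" if "\<forall>p\<in>A. n_atom p" for A
    using that free_ext_fatom_of[OF model_F k] by (force simp: e_def)
  have "set (map fatom_of ps) \<subseteq> FA" "set (fatom_of b # map fatom_of ps) \<subseteq> FA"
    using ps b fatom_of_in_fatoms by auto
  from hat_cong_of_Cg[OF e this(1)] hat_cong_of_Cg[OF e this(2)] E_hat[OF e qE]
  show ?thesis using fe[OF ps] fe[of "insert b (set ps)"] ps b by simp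
qed

lemma closed_under_E_axioms_E_up:
  assumes a: "a \<in> TF"
  shows "closed_under E_axioms F (\<Union>(atoms ` E_up a))"
  unfolding closed_under_def
proof (intro ballI allI impI)
  fix q and k :: "nat \<Rightarrow> _" assume q: "q \<in> E_axioms" and k: "range k \<subseteq> carrier F"
    and p: "\<forall>p\<in>set (fst q). eval_atom F k p \<in> \<Union>(atoms ` E_up a)"
  obtain ps b where q_eq: "q = (ps, b)" by (cases q)
  have "\<forall>p\<in>set ps. n_atom p" "n_atom b" using q by (auto simp: E_axioms_def q_eq)
  moreover have "\<forall>v. k v \<in> carrier F" using k by auto
  ultimately have W: "finite (eval_atom F k ` set ps)"
    "insert (eval_atom F k b) (eval_atom F k ` set ps) \<subseteq> FA"
    using eval_atom_in_fatoms[OF is_struc_F n_atom_wf] by auto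
  have "eval_atom F k ` set ps \<subseteq> \<Union>(atoms ` E_up a)" using p q_eq by auto
  then obtain D where "D \<in> atoms ` E_up a" "eval_atom F k ` set ps \<subseteq> D"
    using updirected_finite_subset[OF updirected_E_up[OF a] W(1)] by blast
  then obtain c where c: "c \<in> E_up a" "eval_atom F k ` set ps \<subseteq> atoms c" by blast
  have "atoms (cong_of (Cg Sig (eval_atom F k ` set ps))) \<subseteq> atoms c"
    using c Cg_least TF_K_cong_set by (auto simp: E_up_def)
  from E_up_absorb[OF c(1) E_axioms_instance[OF q[unfolded q_eq] k] this]
  show "eval_atom F k (snd q) \<in> \<Union>(atoms ` E_up a)"
    using Cg_ext[of "insert (eval_atom F k b) (eval_atom F k ` set ps)" Sig] q_eq by auto
qed

lemma E_up_Kcong: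
  assumes a: "a \<in> TF"
  shows "K_cong_set E_theory (\<Union>(atoms ` E_up a))"
proof -
  let ?D = "\<Union>(atoms ` E_up a)"
  have "K_cong_set Sig D" if "D \<in> atoms ` E_up a" for D
  proof -
    obtain c where "c \<in> TF" "D = atoms c" using \<open>D \<in> atoms ` E_up a\<close> by (auto simp: E_up_def)
    thus ?thesis using TF_K_cong_set by simp
  qed
  hence "is_cong_set af ar F ?D \<and> closed_under Sig F ?D" unfolding K_cong_set_def
    using updirected_Union_is_cong_set[OF updirected_E_up[OF a], of af ar F]
      updirected_Union_closed_under[OF updirected_E_up[OF a], of Sig F] by simp
  hence "K_cong_set (Sig \<union> E_axioms) ?D"
    unfolding K_cong_set_def closed_under_Un using closed_under_E_axioms_E_up[OF a] by blast
  hence "cong_of ?D \<in> ConK af ar (Sig \<union> E_axioms) F" using ConK_F_iff[OF wf_Sig_E_axioms] by simp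
  hence c: "is_cong af ar F (cong_of ?D)" and m: "model af ar (Sig \<union> E_axioms) (quot F (cong_of ?D))"
    by (simp_all add: ConK_def)
  have "model af ar E_theory (quot F (cong_of ?D))"
    using model_Cn_quot_F[OF c wf_Sig_E_axioms m] by (simp add: E_theory_def)
  hence "cong_of ?D \<in> ConK af ar E_theory F" using c by (simp add: ConK_def)
  thus ?thesis using ConK_F_iff[OF K_theory_wf[OF K_theory_E_theory]] by simp
qed

lemma join_E_related:
  assumes a: "a \<in> TF" and b: "b \<in> TF" and sub: "atoms b \<subseteq> Cg E_theory (atoms a)"
  shows "(a, lub ConF {a,b}) \<in> E"
proof -
  have "a \<in> E_up a" using E_up_self[OF a] .
  hence "Cg E_theory (atoms a) \<subseteq> \<Union>(atoms ` E_up a)" using Cg_least[OF E_up_Kcong[OF a]] by blast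
  moreover obtain G where G: "finite G" "G \<subseteq> FA" "b = cong_of (Cg Sig G)" using TF_iff b by blast
  ultimately have "G \<subseteq> \<Union>(atoms ` E_up a)" using sub Cg_ext[of G Sig] by auto
  then obtain c where c: "c \<in> E_up a" "G \<subseteq> atoms c"
    using updirected_finite_subset[OF updirected_E_up[OF a] G(1)] by blast
  hence cT: "c \<in> TF" "(a,c) \<in> E" "atoms b \<subseteq> atoms c"
    using G(3) Cg_least TF_K_cong_set by (auto simp: E_up_def)
  hence "lub ConF {c, b} = c" using join_ConF_absorb TF_ConF b by blast
  hence "(lub ConF {a,b}, c) \<in> E" using E_join[OF cT(2) E_refl[OF b]] by simp
  thus ?thesis using cT(2) E_sym E_trans by blast
qed

lemma kernel_subset_E: "kernel E_theory \<subseteq> E"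
proof (clarify)
  fix a b assume "(a,b) \<in> kernel E_theory"
  hence ab: "a \<in> TF" "b \<in> TF" "Cg E_theory (atoms a) = Cg E_theory (atoms b)"
    by (auto simp: kernel_def)
  have "atoms b \<subseteq> Cg E_theory (atoms a)" "atoms a \<subseteq> Cg E_theory (atoms b)"
    using Cg_ext[of "atoms b" E_theory] Cg_ext[of "atoms a" E_theory] ab(3) by simp_all
  hence "(a, lub ConF {a,b}) \<in> E" "(b, lub ConF {b,a}) \<in> E"
    using join_E_related[OF ab(1,2)] join_E_related[OF ab(2,1)] by blast+
  hence "(a, lub ConF {a,b}) \<in> E" "(b, lub ConF {a,b}) \<in> E" by (simp_all add: insert_commute)
  thus "(a,b) \<in> E" using E_sym E_trans by blast
qed

lemma kernel_surj: "\<exists>T\<in>QTheories af ar Sig n. kernel T = E"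
  using E_theory_QTheories E_subset_kernel kernel_subset_E by blast

end

context free_structure
begin

lemma kernel_image: "kernel ` QTheories af ar Sig n = ConSn af ar Sig n"
proof
  show "kernel ` QTheories af ar Sig n \<subseteq> ConSn af ar Sig n"
    using kernel_in_ConSn QTheories_K_theory by blast
  show "ConSn af ar Sig n \<subseteq> kernel ` QTheories af ar Sig n"
  proof
    fix E assume "E \<in> ConSn af ar Sig n"
    then interpret Sn_congruence af ar Sig n E by unfold_locales
    show "E \<in> kernel ` QTheories af ar Sig n" using kernel_surj by force
  qed
qed

end

theorem theorem3p3:
  fixes af :: "'f \<Rightarrow> nat" and ar :: "'r \<Rightarrow> nat"
    and Sig :: "('f,'r) qid set" and n :: nat
  assumes "\<forall>q\<in>Sig. wf_qid af ar q"
    and "n \<ge> 1"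
  shows "\<exists>\<Phi>. bij_betw \<Phi> (QTheories af ar Sig n) (ConSn af ar Sig n) \<and>
           (\<forall>T1\<in>QTheories af ar Sig n. \<forall>T2\<in>QTheories af ar Sig n.
              T1 \<subseteq> T2 \<longleftrightarrow> \<Phi> T1 \<subseteq> \<Phi> T2)"
proof -
  interpret free_structure af ar Sig n using assms by unfold_locales
  have order: "\<forall>T1\<in>QTheories af ar Sig n. \<forall>T2\<in>QTheories af ar Sig n.
      T1 \<subseteq> T2 \<longleftrightarrow> kernel T1 \<subseteq> kernel T2"
    using kernel_mono kernel_reflects QTheories_K_theory by blast
  hence "inj_on kernel (QTheories af ar Sig n)"
    by (intro inj_onI subset_antisym) (metis order_refl)+
  hence "bij_betw kernel (QTheories af ar Sig n) (ConSn af ar Sig n)"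
    using kernel_image by (simp add: bij_betw_def)
  with order show ?thesis by blast
qed

end
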